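(* Suppose $a(0)\in\mathbb R^m$ and $W(0)\in\mathbb R^{m\times p}$ are chosen randomly, independently of $X$ and $\mathbf y$, such that the distribution of $\theta(0)=a(0)^\top W(0)$ is symmetric about the origin, and let $\hat\theta$ be the estimator defined in the context with this $\theta(0)$. Then $$\mathbb E_{a(0),W(0),X,\mathbf y}[\mathsf{Risk}(\hat\theta)]\ge \mathbb E[\theta^{\star\top}B\theta^\star]+\sigma^2\,\mathbb E[\mathrm{Tr}(C)],$$ where $B=(I-X^\top(XX^\top)^{-1}X)\Sigma(I-X^\top(XX^\top)^{-1}X)$ and $C=(XX^\top)^{-1}X\Sigma X^\top(XX^\top)^{-1}$.
   Context: Setting: $p>n$; data $(x_i,y_i)$ i.i.d. with test pair $(x,y)$; $X\in\mathbb R^{n\times p}$ with rows $x_i^\top$ (assumed of full row rank $n$), $\mathbf y=(y_i)$; $\theta^\star\in\arg\min_\theta\mathbb E[(y-x^\top\theta)^2]$, $\boldsymbol\epsilon=\mathbf y-X\theta^\star$; $\Sigma=\mathbb E[xx^\top]$; the noise satisfies $\mathbb E[y-x^\top\theta^\star\mid x]=0$ and $\mathbb E[(y-x^\top\theta^\star)^2\mid x]=\sigma^2$, with noise components independent across samples. $\mathsf{Risk}(\theta)=\mathbb E_{x,y}[(y-x^\top\theta)^2-(y-x^\top\theta^\star)^2]$. The estimator: $w=\theta(0)/\sqrt{\|\theta(0)\|}$ and $\hat\theta\in\arg\min_\theta\{\|\theta\|^{3/2}-w^\top\theta:\mathbf y=X\theta\}$ (the limit of gradient flow on a balanced two-layer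 linear network initialized at $a(0),W(0)$). *)

theory Defs
  imports "HOL-Probability.Probability"
begin

definition Risk :: "((real^'p) \<times> real) measure \<Rightarrow> real^'p \<Rightarrow> real^'p \<Rightarrow> real" where
  "Risk D \<theta>s \<theta> = (\<integral>z. (snd z - fst z \<bullet> \<theta>)\<^sup>2 - (snd z - fst z \<bullet> \<theta>s)\<^sup>2 \<partial>D)"

definition Sigma_mat :: "((real^'p) \<times> real) measure \<Rightarrow> real^'p^'p" where
  "Sigma_mat D = (\<chi> i j. \<integral>z. fst z $ i * fst z $ j \<partial>D)"

definition init_dir :: "real^'p \<Rightarrow> real^'p" where
  "init_dir \<theta>0 = (1 / sqrt (norm \<theta>0)) *\<^sub>R \<theta>0"

definition is_bias_min :: "real^'p^'n \<Rightarrow> real^'n \<Rightarrow> real^'p \<Rightarrow> real^'p \<Rightarrow> bool" where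
  "is_bias_min X y w \<theta> \<longleftrightarrow> y = X *v \<theta> \<and>
     (\<forall>\<theta>'. y = X *v \<theta>' \<longrightarrow> norm \<theta> powr (3/2) - w \<bullet> \<theta> \<le> norm \<theta>' powr (3/2) - w \<bullet> \<theta>')"

definition null_proj :: "real^'p^'n \<Rightarrow> real^'p^'p" where
  "null_proj X = mat 1 - transpose X ** matrix_inv (X ** transpose X) ** X"

definition B_mat :: "real^'p^'p \<Rightarrow> real^'p^'n \<Rightarrow> real^'p^'p" where
  "B_mat \<Sigma> X = null_proj X ** \<Sigma> ** null_proj X"

definition C_mat :: "real^'p^'p \<Rightarrow> real^'p^'n \<Rightarrow> real^'n^'n" where
  "C_mat \<Sigma> X = matrix_inv (X ** transpose X) ** X ** \<Sigma> ** transpose X ** matrix_inv (X ** transpose X)"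

end

theory Submission
  imports Defs
begin

text \<open>
  For a design X of full row rank the constrained problem splits along
  \<open>ker X \<oplus> range X\<^sup>T\<close>: the minimiser is \<open>X\<^sup>+y + c P w\<close>, where \<open>P\<close> projects onto \<open>ker X\<close>
  and the scalar \<open>c \<ge> 0\<close> depends only on \<open>|X\<^sup>+y|\<close> and \<open>|P w|\<close>. Since \<open>\<theta>(0)\<close> is symmetric
  and independent of the data, replacing \<open>w\<close> by \<open>-w\<close> does not change the expected risk but
  turns \<open>c P w\<close> into \<open>-c P w\<close>; averaging the two and using the parallelogram law for the
  positive semidefinite form of \<open>\<Sigma>\<close> bounds the expected risk from below by that of the
  minimum-norm interpolator \<open>X\<^sup>+y\<close>. Finally \<open>X\<^sup>+y - \<theta>\<^sup>\<star> = X\<^sup>+\<epsilon> - P \<theta>\<^sup>\<star>\<close>: conditionally on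
  the design the cross term has mean zero and the quadratic term in \<open>\<epsilon>\<close> has mean
  \<open>\<sigma>\<^sup>2 Tr C\<close>. Integrability is obtained by truncating on the size of the design-dependent
  coefficients and letting the truncation level tend to infinity.
\<close>

section \<open>Measurability of matrix operations\<close>

lemma borel_measurable_vec_iff:
  fixes f :: "'a \<Rightarrow> 'b::euclidean_space^'n"
  shows "f \<in> borel_measurable M \<longleftrightarrow> (\<forall>i. (\<lambda>x. f x $ i) \<in> borel_measurable M)"
proof
  assume f: "f \<in> borel_measurable M"
  show "\<forall>i. (\<lambda>x. f x $ i) \<in> borel_measurable M"
  proof
    fix i
    have "(\<lambda>x. x $ i) \<in> borel_measurable (borel :: ('b^'n) measure)"
      by (intro borel_measurable_continuous_onI linear_continuous_on bounded_linear_vec_nth)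
    from measurable_compose[OF f this] show "(\<lambda>x. f x $ i) \<in> borel_measurable M" .
  qed
next
  assume c: "\<forall>i. (\<lambda>x. f x $ i) \<in> borel_measurable M"
  have axis: "(\<lambda>x. axis i (f x $ i) :: 'b^'n) \<in> borel_measurable M" for i
  proof -
    have "(axis i :: 'b \<Rightarrow> 'b^'n) \<in> borel_measurable borel"
      unfolding axis_def
    proof (intro borel_measurable_continuous_onI continuous_on_vec_lambda)
      show "continuous_on UNIV (\<lambda>x. if j = i then x else 0 :: 'b)" for j
        by (cases "j = i") (auto simp: continuous_on_id continuous_on_const)
    qed
    from measurable_compose[OF c[rule_format] this] show ?thesis .
  qed
  have "f = (\<lambda>x. \<Sum>i\<in>UNIV. axis i (f x $ i))"
    by (auto simp: vec_eq_iff axis_def sum.delta' cong: if_cong)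
  also have "\<dots> \<in> borel_measurable M"
    using axis by (intro borel_measurable_sum) auto
  finally show "f \<in> borel_measurable M" .
qed

lemma borel_measurable_vec_nth [measurable (raw)]:
  fixes f :: "'a \<Rightarrow> 'b::euclidean_space^'n"
  shows "f \<in> borel_measurable M \<Longrightarrow> (\<lambda>x. f x $ i) \<in> borel_measurable M"
  using borel_measurable_vec_iff by blast

lemma borel_measurable_vec_lambda:
  fixes g :: "'a \<Rightarrow> 'n::finite \<Rightarrow> 'b::euclidean_space"
  shows "(\<And>i. (\<lambda>x. g x i) \<in> borel_measurable M) \<Longrightarrow> (\<lambda>x. \<chi> i. g x i) \<in> borel_measurable M"
  by (subst borel_measurable_vec_iff) simp

lemma borel_measurable_matrix_matrix_mult [measurable (raw)]:
  fixes A :: "'a \<Rightarrow> real^'n^'m" and B :: "'a \<Rightarrow> real^'k^'n"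
  assumes "A \<in> borel_measurable M" "B \<in> borel_measurable M"
  shows "(\<lambda>x. A x ** B x) \<in> borel_measurable M"
  unfolding matrix_matrix_mult_def
  by (intro borel_measurable_vec_lambda) (use assms in measurable)

lemma borel_measurable_matrix_vector_mult [measurable (raw)]:
  fixes A :: "'a \<Rightarrow> real^'n^'m" and v :: "'a \<Rightarrow> real^'n"
  assumes "A \<in> borel_measurable M" "v \<in> borel_measurable M"
  shows "(\<lambda>x. A x *v v x) \<in> borel_measurable M"
  unfolding matrix_vector_mult_def
  by (intro borel_measurable_vec_lambda) (use assms in measurable)

lemma borel_measurable_transpose [measurable (raw)]:
  fixes A :: "'a \<Rightarrow> real^'n^'m"
  assumes "A \<in> borel_measurable M"
  shows "(\<lambda>x. transpose (A x)) \<in> borel_measurable M"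
  unfolding transpose_def
  by (intro borel_measurable_vec_lambda) (use assms in measurable)

lemma borel_measurable_det [measurable (raw)]:
  fixes A :: "'a \<Rightarrow> real^'n^'n"
  assumes "A \<in> borel_measurable M"
  shows "(\<lambda>x. det (A x)) \<in> borel_measurable M"
  unfolding det_def by (use assms in measurable)

lemma borel_measurable_trace [measurable (raw)]:
  fixes A :: "'a \<Rightarrow> real^'n^'n"
  assumes "A \<in> borel_measurable M"
  shows "(\<lambda>x. trace (A x)) \<in> borel_measurable M"
  unfolding trace_def by (use assms in measurable)

text \<open>\<^const>\<open>matrix_inv\<close> is defined by choice; Cramer's rule gives a measurable function of
  the matrix that agrees with it on invertible matrices.\<close>

definition cramer_inv :: "real^'n^'n \<Rightarrow> real^'n^'n" where
  "cramer_inv A = (\<chi> k j. det (\<chi> i l. if l = k then (if i = j then 1 else 0) else A$i$l) / det A)"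

lemma borel_measurable_cramer_inv [measurable (raw)]:
  fixes A :: "'a \<Rightarrow> real^'n^'n"
  assumes [measurable]: "A \<in> borel_measurable M"
  shows "(\<lambda>x. cramer_inv (A x)) \<in> borel_measurable M"
  unfolding cramer_inv_def
  by (intro borel_measurable_vec_lambda borel_measurable_divide borel_measurable_det) measurable

lemma invertible_matrix_inv_mult:
  fixes A :: "'a::semiring_1^'n^'m"
  assumes "invertible A"
  shows "A ** matrix_inv A = mat 1" "matrix_inv A ** A = mat 1"
proof -
  from assms obtain B where "A ** B = mat 1 \<and> B ** A = mat 1" unfolding invertible_def by blast
  then have "A ** matrix_inv A = mat 1 \<and> matrix_inv A ** A = mat 1"
    unfolding matrix_inv_def by (rule someI)
  then show "A ** matrix_inv A = mat 1" "matrix_inv A ** A = mat 1" by auto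
qed

lemma matrix_inv_eq_cramer_inv:
  fixes A :: "real^'n^'n"
  assumes "invertible A"
  shows "matrix_inv A = cramer_inv A"
proof (subst vec_eq_iff, intro allI, subst vec_eq_iff, intro allI)
  fix k j
  have det: "det A \<noteq> 0" using assms invertible_det_nz by blast
  let ?x = "\<chi> k. matrix_inv A $ k $ j"
  let ?b = "\<chi> i. if i = j then 1 else (0::real)"
  have "A *v ?x = (\<chi> i. (A ** matrix_inv A) $ i $ j)"
    by (simp add: matrix_vector_mult_def matrix_matrix_mult_def)
  also have "\<dots> = ?b" by (simp add: invertible_matrix_inv_mult[OF assms] mat_def)
  finally have "?x = (\<chi> k. det (\<chi> i l. if l = k then ?b$i else A$i$l) / det A)"
    using cramer[OF det] by blast
  then have "?x $ k = (\<chi> k. det (\<chi> i l. if l = k then ?b$i else A$i$l) / det A) $ k"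
    by simp
  moreover have "(\<chi> i l. if l = k then ?b$i else A$i$l)
      = (\<chi> i l. if l = k then (if i = j then 1 else 0) else A$i$l)"
    by (simp add: vec_eq_iff)
  ultimately show "matrix_inv A $ k $ j = cramer_inv A $ k $ j"
    by (simp add: cramer_inv_def)
qed

section \<open>The one-dimensional minimisation\<close>

text \<open>The root \<open>c \<ge> 0\<close> of \<open>(81/16) c\<^sup>4 = a\<^sup>2 + c\<^sup>2 b\<^sup>2\<close>, the stationarity condition of
  \<open>c \<mapsto> (a\<^sup>2 + c\<^sup>2 b\<^sup>2)\<^bsup>3/4\<^esup> - c b\<^sup>2\<close>.\<close>

definition bias_scale :: "real \<Rightarrow> real \<Rightarrow> real" where
  "bias_scale a b = sqrt ((8/81) * (b\<^sup>2 + sqrt (b^4 + (81/4) * a\<^sup>2)))"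

lemma bias_scale_nonneg: "bias_scale a b \<ge> 0"
  unfolding bias_scale_def by simp

lemma borel_measurable_bias_scale [measurable (raw)]:
  assumes "f \<in> borel_measurable M" "g \<in> borel_measurable M"
  shows "(\<lambda>x. bias_scale (f x) (g x)) \<in> borel_measurable M"
proof -
  have "(\<lambda>p. bias_scale (fst p) (snd p)) \<in> borel_measurable (borel \<Otimes>\<^sub>M borel)"
    unfolding bias_scale_def borel_prod
    by (intro borel_measurable_continuous_onI continuous_intros)
  from measurable_compose[OF measurable_Pair[OF assms] this] show ?thesis by simp
qed

lemma bias_scale_quartic: "(81/16) * (bias_scale a b)^4 = a\<^sup>2 + (bias_scale a b)\<^sup>2 * b\<^sup>2"
proof -
  define S where "S = sqrt (b^4 + (81/4) * a\<^sup>2)"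
  have S2: "S\<^sup>2 = b^4 + (81/4) * a\<^sup>2"
    unfolding S_def by (simp add: add_nonneg_nonneg)
  have c2: "(bias_scale a b)\<^sup>2 = (8/81) * (b\<^sup>2 + S)"
    unfolding bias_scale_def S_def by (simp add: add_nonneg_nonneg)
  have "(bias_scale a b)^4 = ((bias_scale a b)\<^sup>2)\<^sup>2"
    by (simp add: power_mult[symmetric])
  also have "\<dots> = (64/6561) * (b\<^sup>2 + S)\<^sup>2"
    unfolding c2 power_mult_distrib by (simp add: power2_eq_square)
  also have "(b\<^sup>2 + S)\<^sup>2 = 2 * b^4 + 2 * b\<^sup>2 * S + (81/4) * a\<^sup>2"
    using S2 by (simp add: power2_sum power_mult[symmetric])
  finally show ?thesis
    unfolding c2 by (simp add: algebra_simps)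
qed

lemma bias_scale_eq_0_imp: "bias_scale a b = 0 \<Longrightarrow> b = 0"
proof -
  assume "bias_scale a b = 0"
  then have "b\<^sup>2 + sqrt (b^4 + (81/4) * a\<^sup>2) = 0"
    unfolding bias_scale_def by (simp add: add_nonneg_nonneg)
  moreover have "sqrt (b^4 + (81/4) * a\<^sup>2) \<ge> 0" by simp
  ultimately show "b = 0" by (simp add: add_nonneg_eq_0_iff)
qed

text \<open>Strict convexity of \<open>u \<mapsto> u\<^bsup>3/2\<^esup>\<close> at \<open>u = t\<^sup>2\<close>, written in \<open>s = \<surd>u\<close>.\<close>

lemma cube_le_tangent_imp_eq:
  fixes s t :: real
  assumes "s \<ge> 0" "t > 0" "s^3 - t^3 \<le> (3/2) * t * (s\<^sup>2 - t\<^sup>2)"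
  shows "s = t"
proof -
  have "(s - t)\<^sup>2 * (s + t/2) + (3/2) * t * s\<^sup>2 = s^3 + (1/2) * t^3"
    by (simp add: power2_eq_square power3_eq_cube algebra_simps)
  moreover have "(3/2) * t * (s\<^sup>2 - t\<^sup>2) = (3/2) * t * s\<^sup>2 - (3/2) * t^3"
    by (simp add: power2_eq_square power3_eq_cube field_simps)
  ultimately have "(s - t)\<^sup>2 * (s + t/2) \<le> 0" using assms(3) by linarith
  moreover have "s + t/2 > 0" using assms by simp
  ultimately have "(s - t)\<^sup>2 \<le> 0" by (simp add: mult_le_0_iff)
  then show ?thesis by simp
qed

lemma sq_add_mult_le_sqrt_mult:
  fixes a p q :: real
  shows "a\<^sup>2 + p * q \<le> sqrt (a\<^sup>2 + p\<^sup>2) * sqrt (a\<^sup>2 + q\<^sup>2)"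
proof -
  have "(a\<^sup>2 + p * q)\<^sup>2 \<le> (a\<^sup>2 + p\<^sup>2) * (a\<^sup>2 + q\<^sup>2)"
    using zero_le_power2[of "a * (p - q)"] by (simp add: power2_eq_square algebra_simps)
  then have "a\<^sup>2 + p * q \<le> sqrt ((a\<^sup>2 + p\<^sup>2) * (a\<^sup>2 + q\<^sup>2))"
    by (rule real_le_rsqrt)
  then show ?thesis by (simp add: real_sqrt_mult)
qed

lemma bias_scale_eq_root4:
  assumes "t \<ge> 0" "t^4 = a\<^sup>2 + (bias_scale a b)\<^sup>2 * b\<^sup>2"
  shows "t = (3/2) * bias_scale a b"
proof -
  have "t^4 = ((3/2) * bias_scale a b)^4"
    using assms(2) bias_scale_quartic[of a b] by (simp add: power_mult_distrib power4_eq_xxxx)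
  then show ?thesis
    by (rule power_eq_imp_eq_base) (use assms(1) bias_scale_nonneg in auto)
qed

text \<open>The scalar core of the minimisation: \<open>a = |r|\<close>, \<open>b = |g|\<close>, \<open>n = |v|\<close>, \<open>d = g \<bullet> v\<close>,
  and \<open>s\<^sup>4\<close>, \<open>t\<^sup>4\<close> are the squared norms of the competitor \<open>r + v\<close> and of the candidate
  \<open>r + c g\<close>.\<close>

lemma bias_scale_optimal:
  fixes a b n d s t :: real
  defines "c \<equiv> bias_scale a b"
  assumes s: "s \<ge> 0" "s^4 = a\<^sup>2 + n\<^sup>2" and t: "t \<ge> 0" "t^4 = a\<^sup>2 + c\<^sup>2 * b\<^sup>2"
    and d: "d \<le> b * n"
    and le: "s^3 - d \<le> t^3 - c * b\<^sup>2"
  shows "n\<^sup>2 = c\<^sup>2 * b\<^sup>2" "c * b\<^sup>2 \<le> d"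
proof -
  have c: "c \<ge> 0" unfolding c_def by (rule bias_scale_nonneg)
  have tc: "t = (3/2) * c"
    using bias_scale_eq_root4[OF t[unfolded c_def]] unfolding c_def .
  have "s = t"
  proof (cases "c = 0")
    case True
    then have "s^3 \<le> d" "b = 0"
      using le tc bias_scale_eq_0_imp unfolding c_def by auto
    moreover have "d \<le> 0" using d \<open>b = 0\<close> by simp
    ultimately have "s^3 \<le> 0" by linarith
    then have "s = 0" using s(1) by simp
    then show ?thesis using True tc by simp
  next
    case False
    with c have c_pos: "c > 0" by simp
    have sqrt_eqs: "sqrt (a\<^sup>2 + (c * b)\<^sup>2) = t\<^sup>2" "sqrt (a\<^sup>2 + n\<^sup>2) = s\<^sup>2"
      by (rule real_sqrt_unique; use s t in \<open>simp add: power_mult_distrib power_mult[symmetric]\<close>)+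
    have "c * (d - c * b\<^sup>2) \<le> c * b * n - (c * b)\<^sup>2"
      using d c_pos by (simp add: power2_eq_square algebra_simps)
    also have "\<dots> \<le> t\<^sup>2 * s\<^sup>2 - a\<^sup>2 - (c * b)\<^sup>2"
      using sq_add_mult_le_sqrt_mult[of a "c * b" n] unfolding sqrt_eqs by linarith
    also have "\<dots> = t\<^sup>2 * (s\<^sup>2 - t\<^sup>2)"
      using t(2) by (simp add: power2_eq_square power4_eq_xxxx algebra_simps)
    also have "\<dots> = c * ((3/2) * t * (s\<^sup>2 - t\<^sup>2))"
      using tc by (simp add: power2_eq_square algebra_simps)
    finally have "d - c * b\<^sup>2 \<le> (3/2) * t * (s\<^sup>2 - t\<^sup>2)"
      using c_pos by simp
    with le have cube: "s^3 - t^3 \<le> (3/2) * t * (s\<^sup>2 - t\<^sup>2)" by simp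
    have "t > 0" using c_pos tc by simp
    then show "s = t" using cube_le_tangent_imp_eq[OF s(1) _ cube] by blast
  qed
  then show "n\<^sup>2 = c\<^sup>2 * b\<^sup>2" "c * b\<^sup>2 \<le> d"
    using s(2) t(2) le by auto
qed

lemma powr_three_halves:
  fixes x :: real
  assumes "x \<ge> 0"
  shows "x powr (3/2) = (sqrt x)^3"
proof -
  have "x powr (3/2) = x * x powr (1/2)"
    using powr_add[of x 1 "1/2"] assms by simp
  also have "\<dots> = (sqrt x)\<^sup>2 * sqrt x"
    using assms by (simp add: powr_half_sqrt)
  finally show ?thesis by (simp add: power2_eq_square power3_eq_cube)
qed

lemma bias_min_orthogonal_unique:
  fixes r g v :: "'a::real_inner"
  defines "c \<equiv> bias_scale (norm r) (norm g)"
  assumes rv: "r \<bullet> v = 0" and rg: "r \<bullet> g = 0"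
    and le: "norm (r + v) powr (3/2) - g \<bullet> v \<le> norm (r + c *\<^sub>R g) powr (3/2) - c * (g \<bullet> g)"
  shows "v = c *\<^sub>R g"
proof -
  have c: "c \<ge> 0" unfolding c_def by (rule bias_scale_nonneg)
  have norm_rv: "(norm (r + v))\<^sup>2 = (norm r)\<^sup>2 + (norm v)\<^sup>2"
    unfolding power2_norm_eq_inner using rv by (simp add: inner_add inner_commute)
  have norm_rg: "(norm (r + c *\<^sub>R g))\<^sup>2 = (norm r)\<^sup>2 + c\<^sup>2 * (norm g)\<^sup>2"
    unfolding power2_norm_eq_inner using rg by (simp add: inner_add inner_commute power2_eq_square)
  have sq4: "(sqrt (norm x))^4 = (norm x)\<^sup>2" for x :: 'a
    using power_mult[of "sqrt (norm x)" 2 2] by simp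
  have opt: "(norm v)\<^sup>2 = c\<^sup>2 * (norm g)\<^sup>2 \<and> c * (norm g)\<^sup>2 \<le> g \<bullet> v"
    using bias_scale_optimal[of "sqrt (norm (r + v))" "norm r" "norm v"
        "sqrt (norm (r + c *\<^sub>R g))" "norm g" "g \<bullet> v"]
      le norm_cauchy_schwarz[of g v] norm_rv norm_rg
    unfolding c_def[symmetric] by (simp add: sq4 powr_three_halves power2_norm_eq_inner)
  have "(norm (v - c *\<^sub>R g))\<^sup>2 = (norm v)\<^sup>2 - 2 * c * (g \<bullet> v) + c\<^sup>2 * (norm g)\<^sup>2"
    unfolding power2_norm_eq_inner by (simp add: inner_diff inner_commute power2_eq_square algebra_simps)
  also have "\<dots> \<le> 0"
  proof -
    have "c * (c * (norm g)\<^sup>2) \<le> c * (g \<bullet> v)" using opt c by (intro mult_left_mono) auto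
    then show ?thesis using opt by (simp add: power2_eq_square algebra_simps)
  qed
  finally show ?thesis by simp
qed

section \<open>Designs of full row rank\<close>

lemma inner_transpose_mult: "(transpose A *v z) \<bullet> v = z \<bullet> ((A::real^'a^'b) *v v)"
  by (simp add: dot_lmul_matrix)

lemma quadratic_form_parallelogram_ge:
  fixes S :: "real^'p^'p"
  assumes psd: "v \<bullet> (S *v v) \<ge> 0"
  shows "2 * (u \<bullet> (S *v u)) \<le> (u + v) \<bullet> (S *v (u + v)) + (u - v) \<bullet> (S *v (u - v))"
proof -
  have "(u + v) \<bullet> (S *v (u + v)) + (u - v) \<bullet> (S *v (u - v)) = 2 * (u \<bullet> (S *v u)) + 2 * (v \<bullet> (S *v v))"
    by (simp add: matrix_vector_right_distrib matrix_vector_mult_diff_distrib inner_add_left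
        inner_add_right inner_diff_left inner_diff_right)
  then show ?thesis using psd by simp
qed

lemma congruence_diag_eq:
  fixes A :: "real^'n^'p" and S :: "real^'p^'p"
  shows "(transpose A ** S ** A) $ i $ i = (A *v axis i 1) \<bullet> (S *v (A *v axis i 1))"
proof -
  have column: "(B *v axis i 1) $ i = B $ i $ i" for B :: "real^'n^'n"
    by (simp add: matrix_vector_mult_def axis_def if_distrib cong: if_cong)
  have "(transpose A ** S ** A) $ i $ i = axis i 1 \<bullet> ((transpose A ** S ** A) *v axis i 1)"
    by (simp add: inner_axis' column)
  also have "\<dots> = axis i 1 \<bullet> (transpose A *v (S *v (A *v axis i 1)))"
    by (simp add: matrix_vector_mul_assoc matrix_mul_assoc)
  also have "\<dots> = (S *v (A *v axis i 1)) \<bullet> (A *v axis i 1)"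
    by (subst inner_commute) (rule inner_transpose_mult)
  also have "\<dots> = (A *v axis i 1) \<bullet> (S *v (A *v axis i 1))"
    by (rule inner_commute)
  finally show ?thesis .
qed

text \<open>Measurable versions of \<open>X\<^sup>T (X X\<^sup>T)\<^sup>-\<^sup>1\<close> and of \<^const>\<open>null_proj\<close>.\<close>

definition pseudo_inv :: "real^'p^'n \<Rightarrow> real^'n^'p" where
  "pseudo_inv x = transpose x ** cramer_inv (x ** transpose x)"

definition kernel_proj :: "real^'p^'n \<Rightarrow> real^'p^'p" where
  "kernel_proj x = mat 1 - pseudo_inv x ** x"

lemma borel_measurable_pseudo_inv [measurable (raw)]:
  "f \<in> borel_measurable M \<Longrightarrow> (\<lambda>x. pseudo_inv (f x)) \<in> borel_measurable M"
proof -
  assume [measurable]: "f \<in> borel_measurable M"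
  have [measurable]: "(\<lambda>x. f x ** transpose (f x)) \<in> borel_measurable M" by measurable
  have [measurable]: "(\<lambda>x. cramer_inv (f x ** transpose (f x))) \<in> borel_measurable M"
    by (rule borel_measurable_cramer_inv) measurable
  show ?thesis unfolding pseudo_inv_def by measurable
qed

lemma borel_measurable_kernel_proj [measurable (raw)]:
  "f \<in> borel_measurable M \<Longrightarrow> (\<lambda>x. kernel_proj (f x)) \<in> borel_measurable M"
  unfolding kernel_proj_def by (intro borel_measurable_diff) measurable

definition bias_min_sol :: "real^'p^'n \<Rightarrow> real^'n \<Rightarrow> real^'p \<Rightarrow> real^'p" where
  "bias_min_sol x y w = pseudo_inv x *v y
     + bias_scale (norm (pseudo_inv x *v y)) (norm (kernel_proj x *v w)) *\<^sub>R (kernel_proj x *v w)"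

lemma borel_measurable_bias_min_sol [measurable (raw)]:
  assumes [measurable]: "x \<in> borel_measurable M" "y \<in> borel_measurable M" "w \<in> borel_measurable M"
  shows "(\<lambda>z. bias_min_sol (x z) (y z) (w z)) \<in> borel_measurable M"
proof -
  have r: "(\<lambda>z. pseudo_inv (x z) *v y z) \<in> borel_measurable M" by measurable
  have g: "(\<lambda>z. kernel_proj (x z) *v w z) \<in> borel_measurable M" by measurable
  have c: "(\<lambda>z. bias_scale (norm (pseudo_inv (x z) *v y z)) (norm (kernel_proj (x z) *v w z)))
      \<in> borel_measurable M"
    by (intro borel_measurable_bias_scale measurable_compose[OF r borel_measurable_norm]
        measurable_compose[OF g borel_measurable_norm])
  show ?thesis
    unfolding bias_min_sol_def by (intro borel_measurable_add borel_measurable_scaleR r g c)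
qed

lemma bias_min_sol_uminus:
  "bias_min_sol x y (- w) = pseudo_inv x *v y
     - bias_scale (norm (pseudo_inv x *v y)) (norm (kernel_proj x *v w)) *\<^sub>R (kernel_proj x *v w)"
proof -
  have minus: "kernel_proj x *v (- w) = - (kernel_proj x *v w)"
    using matrix_vector_mult_scaleR[of "kernel_proj x" "-1" w] by simp
  show ?thesis unfolding bias_min_sol_def minus by simp
qed

locale full_row_rank =
  fixes x :: "real^'p^'n"
  assumes rank: "rank x = CARD('n)"
begin

lemma transpose_mult_eq_0_imp: "transpose x *v v = 0 \<Longrightarrow> v = 0"
proof -
  assume v: "transpose x *v v = 0"
  obtain u where u: "x *v u = v"
    using rank full_rank_surjective by (metis surjD)
  have "v \<bullet> v = v \<bullet> (x *v u)" using u by simp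
  also have "\<dots> = (transpose x *v v) \<bullet> u" by (rule inner_transpose_mult[symmetric])
  finally show "v = 0" using v by simp
qed

lemma invertible_gram: "invertible (x ** transpose x)"
proof -
  have "inj ((*v) (x ** transpose x))"
  proof (rule injI)
    fix a b assume "(x ** transpose x) *v a = (x ** transpose x) *v b"
    then have "(a - b) \<bullet> ((x ** transpose x) *v (a - b)) = 0"
      by (simp add: matrix_vector_mult_diff_distrib)
    then have "(transpose x *v (a - b)) \<bullet> (transpose x *v (a - b)) = 0"
      by (simp add: inner_transpose_mult[symmetric] matrix_vector_mul_assoc[symmetric])
    then show "a = b" using transpose_mult_eq_0_imp[of "a - b"] by simp
  qed
  then have "rank (x ** transpose x) = CARD('n)" using full_rank_injective by blast
  then have "det (x ** transpose x) \<noteq> 0" by (simp add: det_eq_0_rank)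
  then show ?thesis using invertible_det_nz by blast
qed

lemmas gram_matrix_inv = invertible_matrix_inv_mult[OF invertible_gram]

lemma transpose_gram_inv: "transpose (matrix_inv (x ** transpose x)) = matrix_inv (x ** transpose x)"
proof -
  let ?G = "matrix_inv (x ** transpose x)"
  have left: "transpose ?G ** (x ** transpose x) = mat 1"
    using arg_cong[OF gram_matrix_inv(1), of transpose] by (simp add: matrix_transpose_mul)
  have "transpose ?G = transpose ?G ** ((x ** transpose x) ** ?G)"
    using gram_matrix_inv by simp
  also have "\<dots> = ?G" using left by (simp add: matrix_mul_assoc)
  finally show ?thesis .
qed

lemma pseudo_inv_eq: "pseudo_inv x = transpose x ** matrix_inv (x ** transpose x)"
  unfolding pseudo_inv_def matrix_inv_eq_cramer_inv[OF invertible_gram] ..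

lemma null_proj_eq_kernel_proj: "null_proj x = kernel_proj x"
  unfolding null_proj_def kernel_proj_def pseudo_inv_eq by (simp add: matrix_mul_assoc)

lemma C_mat_eq: "C_mat S x = transpose (pseudo_inv x) ** S ** pseudo_inv x"
  unfolding C_mat_def pseudo_inv_eq
  by (simp add: matrix_transpose_mul transpose_gram_inv matrix_mul_assoc)

lemma mult_pseudo_inv: "x ** pseudo_inv x = mat 1"
  unfolding pseudo_inv_eq using gram_matrix_inv by (simp add: matrix_mul_assoc)

lemma mult_pseudo_inv_vector: "x *v (pseudo_inv x *v y) = y"
  by (simp add: matrix_vector_mul_assoc mult_pseudo_inv)

lemma kernel_proj_vector: "kernel_proj x *v u = u - pseudo_inv x *v (x *v u)"
  unfolding kernel_proj_def by (simp add: matrix_vector_mult_diff_rdistrib matrix_vector_mul_assoc)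

lemma mult_kernel_proj_vector: "x *v (kernel_proj x *v u) = 0"
  unfolding kernel_proj_vector by (simp add: matrix_vector_mult_diff_distrib mult_pseudo_inv_vector)

lemma kernel_proj_fixes_kernel: "x *v v = 0 \<Longrightarrow> kernel_proj x *v v = v"
  unfolding kernel_proj_vector by simp

lemma pseudo_inv_orthogonal_kernel:
  assumes "x *v v = 0"
  shows "(pseudo_inv x *v y) \<bullet> v = 0"
proof -
  have "(pseudo_inv x *v y) \<bullet> v = (transpose x *v (matrix_inv (x ** transpose x) *v y)) \<bullet> v"
    unfolding pseudo_inv_eq by (simp add: matrix_vector_mul_assoc)
  also have "\<dots> = (matrix_inv (x ** transpose x) *v y) \<bullet> (x *v v)"
    by (rule inner_transpose_mult)
  also have "\<dots> = 0" using assms by simp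
  finally show ?thesis .
qed

lemma transpose_kernel_proj: "transpose (kernel_proj x) = kernel_proj x"
proof -
  have "transpose (pseudo_inv x ** x) = pseudo_inv x ** x"
    unfolding pseudo_inv_eq by (simp add: matrix_transpose_mul transpose_gram_inv matrix_mul_assoc)
  then show ?thesis
    unfolding kernel_proj_def by (simp add: vec_eq_iff transpose_def mat_def)
qed

lemma inner_kernel_proj: "w \<bullet> (kernel_proj x *v v) = (kernel_proj x *v w) \<bullet> v"
  using inner_transpose_mult[of "kernel_proj x" w v] transpose_kernel_proj by simp

text \<open>Writing a feasible \<open>\<theta>\<close> as \<open>X\<^sup>+y + v\<close> with \<open>X v = 0\<close>, only the component \<open>P w\<close> of
  \<open>w\<close> enters the objective, and \<^const>\<open>bias_min_sol\<close> is a feasible competitor.\<close>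

lemma is_bias_min_eq:
  assumes "is_bias_min x y w \<theta>"
  shows "\<theta> = bias_min_sol x y w"
proof -
  define r where "r = pseudo_inv x *v y"
  define g where "g = kernel_proj x *v w"
  define c where "c = bias_scale (norm r) (norm g)"
  define v where "v = \<theta> - r"
  have feasible: "y = x *v \<theta>"
    and opt: "\<And>\<theta>'. y = x *v \<theta>' \<Longrightarrow> norm \<theta> powr (3/2) - w \<bullet> \<theta> \<le> norm \<theta>' powr (3/2) - w \<bullet> \<theta>'"
    using assms unfolding is_bias_min_def by auto
  have xg: "x *v g = 0" unfolding g_def by (rule mult_kernel_proj_vector)
  have xr: "x *v r = y" unfolding r_def by (rule mult_pseudo_inv_vector)
  have xv: "x *v v = 0" unfolding v_def using feasible xr by (simp add: matrix_vector_mult_diff_distrib)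
  have "y = x *v (r + c *\<^sub>R g)"
    using xr xg by (simp add: matrix_vector_right_distrib matrix_vector_mult_scaleR)
  from opt[OF this] have "norm (r + v) powr (3/2) - w \<bullet> (r + v)
      \<le> norm (r + c *\<^sub>R g) powr (3/2) - w \<bullet> (r + c *\<^sub>R g)"
    unfolding v_def by simp
  then have "norm (r + v) powr (3/2) - w \<bullet> v \<le> norm (r + c *\<^sub>R g) powr (3/2) - c * (w \<bullet> g)"
    by (simp add: inner_add_right)
  moreover have "w \<bullet> v = g \<bullet> v" "w \<bullet> g = g \<bullet> g"
    using inner_kernel_proj[of w] kernel_proj_fixes_kernel xv xg unfolding g_def by metis+
  ultimately have "v = c *\<^sub>R g"
    unfolding c_def
    by (intro bias_min_orthogonal_unique) (simp_all add: r_def pseudo_inv_orthogonal_kernel xv xg)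
  then show ?thesis
    unfolding bias_min_sol_def v_def r_def g_def c_def by (simp add: algebra_simps)
qed

lemma B_mat_quadratic:
  "\<theta> \<bullet> (B_mat S x *v \<theta>) = (kernel_proj x *v \<theta>) \<bullet> (S *v (kernel_proj x *v \<theta>))"
  unfolding B_mat_def null_proj_eq_kernel_proj
  by (simp add: matrix_vector_mul_assoc[symmetric] matrix_mul_assoc inner_kernel_proj)

lemma interpolator_quadratic_decomp:
  fixes S :: "real^'p^'p" and y :: "real^'n" and \<theta>s :: "real^'p"
  assumes S: "transpose S = S"
  defines "\<epsilon> \<equiv> y - x *v \<theta>s"
  shows "(pseudo_inv x *v y - \<theta>s) \<bullet> (S *v (pseudo_inv x *v y - \<theta>s)) =
      (kernel_proj x *v \<theta>s) \<bullet> (S *v (kernel_proj x *v \<theta>s))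
      - 2 * (\<epsilon> \<bullet> (transpose (pseudo_inv x) *v (S *v (kernel_proj x *v \<theta>s))))
      + \<epsilon> \<bullet> ((transpose (pseudo_inv x) ** S ** pseudo_inv x) *v \<epsilon>)"
proof -
  define u where "u = kernel_proj x *v \<theta>s"
  define w where "w = pseudo_inv x *v \<epsilon>"
  have S_sym: "a \<bullet> (S *v b) = b \<bullet> (S *v a)" for a b
    using inner_transpose_mult[of S a b] S by (simp add: inner_commute)
  have "pseudo_inv x *v y - \<theta>s = w - u"
    unfolding w_def u_def \<epsilon>_def kernel_proj_vector by (simp add: matrix_vector_mult_diff_distrib)
  moreover have "(w - u) \<bullet> (S *v (w - u)) = u \<bullet> (S *v u) - 2 * (u \<bullet> (S *v w)) + w \<bullet> (S *v w)"
    using S_sym[of w u] by (simp add: matrix_vector_mult_diff_distrib inner_diff_left inner_diff_right)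
  moreover have "u \<bullet> (S *v w) = \<epsilon> \<bullet> (transpose (pseudo_inv x) *v (S *v u))"
  proof -
    have "u \<bullet> (S *v w) = (S *v u) \<bullet> w" using S_sym[of u w] by (simp add: inner_commute)
    also have "\<dots> = (transpose (pseudo_inv x) *v (S *v u)) \<bullet> \<epsilon>"
      unfolding w_def by (rule inner_transpose_mult[symmetric])
    finally show ?thesis by (simp add: inner_commute)
  qed
  moreover have "w \<bullet> (S *v w) = \<epsilon> \<bullet> ((transpose (pseudo_inv x) ** S ** pseudo_inv x) *v \<epsilon>)"
  proof -
    have "w \<bullet> (S *v w) = (transpose (pseudo_inv x) *v (S *v w)) \<bullet> \<epsilon>"
      unfolding w_def by (subst inner_transpose_mult) (rule inner_commute)
    then show ?thesis
      unfolding w_def by (simp add: inner_commute matrix_vector_mul_assoc matrix_mul_assoc)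
  qed
  ultimately show ?thesis unfolding u_def by simp
qed

end

section \<open>The noise model\<close>

lemma integrable_mult_bounded:
  fixes f g :: "'a \<Rightarrow> real"
  assumes f: "integrable M f" and g: "g \<in> borel_measurable M"
    and bound: "\<And>x. x \<in> space M \<Longrightarrow> \<bar>g x\<bar> \<le> K"
  shows "integrable M (\<lambda>x. f x * g x)"
proof (rule Bochner_Integration.integrable_bound[OF integrable_mult_left[OF integrable_abs[OF f], of "\<bar>K\<bar>"]])
  show "(\<lambda>x. f x * g x) \<in> borel_measurable M" using f g by measurable
  show "AE x in M. norm (f x * g x) \<le> norm (\<bar>f x\<bar> * \<bar>K\<bar>)"
  proof (rule AE_I2)
    fix x assume "x \<in> space M"
    then have "\<bar>f x\<bar> * \<bar>g x\<bar> \<le> \<bar>f x\<bar> * \<bar>K\<bar>"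
      using bound[of x] by (intro mult_left_mono) auto
    then show "norm (f x * g x) \<le> norm (\<bar>f x\<bar> * \<bar>K\<bar>)" by (simp add: abs_mult)
  qed
qed

lemma integrable_mult_of_squares:
  fixes f g :: "'a \<Rightarrow> real"
  assumes [measurable]: "f \<in> borel_measurable M" "g \<in> borel_measurable M"
    and "integrable M (\<lambda>x. (f x)\<^sup>2)" "integrable M (\<lambda>x. (g x)\<^sup>2)"
  shows "integrable M (\<lambda>x. f x * g x)"
proof (rule Bochner_Integration.integrable_bound[OF Bochner_Integration.integrable_add[OF assms(3,4)]])
  show "(\<lambda>x. f x * g x) \<in> borel_measurable M" by measurable
  have ineq: "\<bar>a * b\<bar> \<le> a\<^sup>2 + b\<^sup>2" for a b :: real
  proof -
    have "(\<bar>a\<bar> - \<bar>b\<bar>)\<^sup>2 = a\<^sup>2 + b\<^sup>2 - 2 * (\<bar>a\<bar> * \<bar>b\<bar>)" by (simp add: power2_diff)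
    moreover have "(\<bar>a\<bar> - \<bar>b\<bar>)\<^sup>2 \<ge> 0" "\<bar>a\<bar> * \<bar>b\<bar> \<ge> 0" by simp_all
    ultimately show ?thesis unfolding abs_mult by linarith
  qed
  show "AE x in M. norm (f x * g x) \<le> norm ((f x)\<^sup>2 + (g x)\<^sup>2)"
    unfolding real_norm_def by (intro AE_I2 order_trans[OF ineq abs_ge_self])
qed

locale linear_model =
  fixes D :: "((real^'p) \<times> real) measure" and \<theta>s :: "real^'p" and \<sigma> :: real
  assumes prob_space_D: "prob_space D" and sets_D: "sets D = sets borel"
    and mom_x: "integrable D (\<lambda>z. (norm (fst z))\<^sup>2)"
    and mom_y: "integrable D (\<lambda>z. (snd z)\<^sup>2)"
    and noise_mean: "AE z in D. real_cond_exp D (vimage_algebra (space D) fst borel)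
                        (\<lambda>z. snd z - fst z \<bullet> \<theta>s) z = 0"
    and noise_var: "AE z in D. real_cond_exp D (vimage_algebra (space D) fst borel)
                        (\<lambda>z. (snd z - fst z \<bullet> \<theta>s)\<^sup>2) z = \<sigma>\<^sup>2"
begin

interpretation P: prob_space D by (rule prob_space_D)

lemma sets_D_pair [measurable_cong]: "sets D = sets (borel \<Otimes>\<^sub>M borel)"
  by (subst borel_prod) (rule sets_D)

definition noise :: "(real^'p) \<times> real \<Rightarrow> real" where
  "noise z = snd z - fst z \<bullet> \<theta>s"

lemma borel_measurable_noise [measurable]: "noise \<in> borel_measurable (borel \<Otimes>\<^sub>M borel)"
  unfolding noise_def by measurable

abbreviation design_algebra :: "((real^'p) \<times> real) measure" where
  "design_algebra \<equiv> vimage_algebra (space D) fst borel"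

lemma sigma_finite_subalgebra_design: "sigma_finite_subalgebra D design_algebra"
proof -
  have "subalgebra D design_algebra"
    unfolding subalgebra_def
  proof
    show "sets design_algebra \<subseteq> sets D" by (rule sets_image_in_sets) auto
  qed simp
  then have "finite_measure_subalgebra D design_algebra"
    unfolding finite_measure_subalgebra_def finite_measure_subalgebra_axioms_def
    using P.finite_measure_axioms by simp
  then show ?thesis by (rule finite_measure_subalgebra_is_sigma_finite)
qed

lemma borel_measurable_design_algebra:
  "h \<in> borel_measurable borel \<Longrightarrow> (\<lambda>z. h (fst z)) \<in> borel_measurable design_algebra"
proof -
  assume h: "h \<in> borel_measurable borel"
  have "fst \<in> measurable design_algebra borel" by (rule measurable_vimage_algebra1) simp
  from measurable_compose[OF this h] show ?thesis .
qed

lemma integrable_inner_sq: "integrable D (\<lambda>z. (fst z \<bullet> u)\<^sup>2)"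
proof (rule Bochner_Integration.integrable_bound[OF integrable_mult_right[OF mom_x, of "(norm u)\<^sup>2"]])
  show "(\<lambda>z. (fst z \<bullet> u)\<^sup>2) \<in> borel_measurable D" by measurable
  have "(fst z \<bullet> u)\<^sup>2 \<le> (norm (fst z) * norm u)\<^sup>2" for z :: "(real^'p) \<times> real"
    using Cauchy_Schwarz_ineq2[of "fst z" u] by (metis abs_ge_zero power2_abs power_mono)
  then show "AE z in D. norm ((fst z \<bullet> u)\<^sup>2) \<le> norm ((norm u)\<^sup>2 * (norm (fst z))\<^sup>2)"
    by (intro AE_I2) (simp add: power_mult_distrib mult.commute)
qed

lemma integrable_noise_sq: "integrable D (\<lambda>z. (noise z)\<^sup>2)"
proof (rule Bochner_Integration.integrable_bound[OF Bochner_Integration.integrable_add[OF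
      integrable_mult_right[OF mom_y, of 2] integrable_mult_right[OF integrable_inner_sq[of \<theta>s], of 2]]])
  show "(\<lambda>z. (noise z)\<^sup>2) \<in> borel_measurable D" by measurable
  have "(snd z - fst z \<bullet> \<theta>s)\<^sup>2 \<le> 2 * (snd z)\<^sup>2 + 2 * (fst z \<bullet> \<theta>s)\<^sup>2" for z :: "(real^'p) \<times> real"
    using zero_le_power2[of "snd z + fst z \<bullet> \<theta>s"] by (simp add: power2_eq_square algebra_simps)
  then show "AE z in D. norm ((noise z)\<^sup>2) \<le> norm (2 * (snd z)\<^sup>2 + 2 * (fst z \<bullet> \<theta>s)\<^sup>2)"
    by (intro AE_I2) (simp add: noise_def)
qed

lemma integrable_noise: "integrable D noise"
  by (rule P.square_integrable_imp_integrable) (simp_all add: integrable_noise_sq)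

lemma integrable_design_mult_noise: "integrable D (\<lambda>z. (fst z \<bullet> u) * noise z)"
  by (rule integrable_mult_of_squares) (simp_all add: integrable_inner_sq integrable_noise_sq)

lemma integral_mult_noise_eq_0:
  assumes [measurable]: "h \<in> borel_measurable borel"
    and "integrable D (\<lambda>z. h (fst z) * noise z)"
  shows "(\<integral>z. h (fst z) * noise z \<partial>D) = 0"
proof -
  interpret S: sigma_finite_subalgebra D design_algebra by (rule sigma_finite_subalgebra_design)
  have "(\<integral>z. h (fst z) * noise z \<partial>D) = (\<integral>z. h (fst z) * real_cond_exp D design_algebra noise z \<partial>D)"
    using assms by (intro S.real_cond_exp_intg(2)[symmetric] borel_measurable_design_algebra) auto
  also have "\<dots> = (\<integral>z. 0 \<partial>D)"
    by (rule integral_cong_AE) (use noise_mean in \<open>auto simp: noise_def[abs_def]\<close>)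
  finally show ?thesis by simp
qed

lemma integral_mult_noise_sq:
  assumes [measurable]: "h \<in> borel_measurable borel"
    and "integrable D (\<lambda>z. h (fst z) * (noise z)\<^sup>2)"
  shows "(\<integral>z. h (fst z) * (noise z)\<^sup>2 \<partial>D) = \<sigma>\<^sup>2 * (\<integral>z. h (fst z) \<partial>D)"
proof -
  interpret S: sigma_finite_subalgebra D design_algebra by (rule sigma_finite_subalgebra_design)
  have "(\<integral>z. h (fst z) * (noise z)\<^sup>2 \<partial>D)
      = (\<integral>z. h (fst z) * real_cond_exp D design_algebra (\<lambda>z. (noise z)\<^sup>2) z \<partial>D)"
    using assms by (intro S.real_cond_exp_intg(2)[symmetric] borel_measurable_design_algebra) auto
  also have "\<dots> = (\<integral>z. h (fst z) * \<sigma>\<^sup>2 \<partial>D)"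
    by (rule integral_cong_AE) (use noise_var in \<open>auto simp: noise_def[abs_def]\<close>)
  finally show ?thesis by simp
qed

definition Sigma_quad :: "real^'p \<Rightarrow> real" where
  "Sigma_quad u = u \<bullet> (Sigma_mat D *v u)"

lemma borel_measurable_Sigma_quad [measurable]: "Sigma_quad \<in> borel_measurable borel"
  unfolding Sigma_quad_def by measurable

lemma integral_inner_sq: "(\<integral>z. (fst z \<bullet> u)\<^sup>2 \<partial>D) = Sigma_quad u"
proof -
  have integrable: "integrable D (\<lambda>z. fst z $ i * fst z $ j)" for i j
    by (rule integrable_mult_of_squares)
      (simp_all add: integrable_inner_sq cart_eq_inner_axis[of "fst _"])
  have expand: "(fst z \<bullet> u)\<^sup>2 = (\<Sum>i\<in>UNIV. \<Sum>j\<in>UNIV. (u$i * u$j) * (fst z $ i * fst z $ j))"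
    for z :: "(real^'p) \<times> real"
    by (simp add: inner_vec_def power2_eq_square sum_product algebra_simps)
  have "(\<integral>z. (fst z \<bullet> u)\<^sup>2 \<partial>D)
      = (\<integral>z. (\<Sum>i\<in>UNIV. \<Sum>j\<in>UNIV. (u$i * u$j) * (fst z $ i * fst z $ j)) \<partial>D)"
    by (simp only: expand)
  also have "\<dots> = (\<Sum>i\<in>UNIV. \<Sum>j\<in>UNIV. (u$i * u$j) * (\<integral>z. fst z $ i * fst z $ j \<partial>D))"
    by (simp add: integrable Bochner_Integration.integral_sum)
  also have "\<dots> = Sigma_quad u"
    by (simp add: Sigma_quad_def inner_vec_def matrix_vector_mult_def Sigma_mat_def
        sum_distrib_left algebra_simps)
  finally show ?thesis .
qed

lemma Sigma_quad_nonneg: "Sigma_quad u \<ge> 0"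
  using integral_inner_sq[of u] by (metis integral_nonneg_AE AE_I2 zero_le_power2)

lemma transpose_Sigma_mat: "transpose (Sigma_mat D) = Sigma_mat D"
  by (simp add: vec_eq_iff transpose_def Sigma_mat_def mult.commute)

text \<open>The cross term vanishes because the noise has conditional mean zero given \<open>x\<close>.\<close>

lemma Risk_eq_Sigma_quad: "Risk D \<theta>s \<theta> = Sigma_quad (\<theta> - \<theta>s)"
proof -
  define u where "u = \<theta> - \<theta>s"
  have expand: "(snd z - fst z \<bullet> \<theta>)\<^sup>2 - (snd z - fst z \<bullet> \<theta>s)\<^sup>2
      = (fst z \<bullet> u)\<^sup>2 - 2 * ((fst z \<bullet> u) * noise z)" for z :: "(real^'p) \<times> real"
    unfolding u_def noise_def by (simp add: inner_diff_right power2_eq_square algebra_simps)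
  have "Risk D \<theta>s \<theta> = (\<integral>z. (fst z \<bullet> u)\<^sup>2 - 2 * ((fst z \<bullet> u) * noise z) \<partial>D)"
    unfolding Risk_def expand ..
  also have "\<dots> = (\<integral>z. (fst z \<bullet> u)\<^sup>2 \<partial>D) - 2 * (\<integral>z. (fst z \<bullet> u) * noise z \<partial>D)"
    using integrable_inner_sq integrable_design_mult_noise by simp
  also have "(\<integral>z. (fst z \<bullet> u) * noise z \<partial>D) = 0"
    by (rule integral_mult_noise_eq_0[where h="\<lambda>x. x \<bullet> u"]) (simp_all add: integrable_design_mult_noise)
  finally show ?thesis by (simp add: integral_inner_sq u_def)
qed

lemma Sigma_quad_interpolator_le:
  "2 * Sigma_quad (pseudo_inv x *v y - \<theta>s)
     \<le> Sigma_quad (bias_min_sol x y w - \<theta>s) + Sigma_quad (bias_min_sol x y (- w) - \<theta>s)"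
proof -
  define u where "u = pseudo_inv x *v y - \<theta>s"
  define v where "v = bias_scale (norm (pseudo_inv x *v y)) (norm (kernel_proj x *v w)) *\<^sub>R (kernel_proj x *v w)"
  have "bias_min_sol x y w - \<theta>s = u + v"
    unfolding bias_min_sol_def u_def v_def by simp
  moreover have "bias_min_sol x y (- w) - \<theta>s = u - v"
    unfolding bias_min_sol_uminus u_def v_def by simp
  moreover have "2 * Sigma_quad u \<le> Sigma_quad (u + v) + Sigma_quad (u - v)"
    unfolding Sigma_quad_def
    by (rule quadratic_form_parallelogram_ge) (rule Sigma_quad_nonneg[unfolded Sigma_quad_def])
  ultimately show ?thesis unfolding u_def[symmetric] by (simp only:)
qed

end

section \<open>Independent samples\<close>

abbreviation pair_borel :: "('a::topological_space \<times> 'b::topological_space) measure" where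
  "pair_borel \<equiv> borel \<Otimes>\<^sub>M borel"

lemma space_pair_borel [simp]: "space pair_borel = UNIV"
  by (simp add: space_pair_measure)

locale random_design = linear_model D \<theta>s \<sigma>
  for D :: "((real^'p) \<times> real) measure" and \<theta>s \<sigma> +
  fixes M :: "'w measure" and X :: "'w \<Rightarrow> real^'p^'n" and Y :: "'w \<Rightarrow> real^'n"
  assumes prob_space_M: "prob_space M"
    and measurable_X [measurable]: "X \<in> borel_measurable M"
    and measurable_Y [measurable]: "Y \<in> borel_measurable M"
    and iid: "prob_space.indep_vars M (\<lambda>_. borel) (\<lambda>i \<omega>. (X \<omega> $ i, Y \<omega> $ i)) UNIV"
    and ident: "\<And>i. distr M borel (\<lambda>\<omega>. (X \<omega> $ i, Y \<omega> $ i)) = D"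
    and full_rank: "\<And>\<omega>. \<omega> \<in> space M \<Longrightarrow> rank (X \<omega>) = CARD('n)"
begin

sublocale PM: prob_space M by (rule prob_space_M)

definition sample :: "'n \<Rightarrow> 'w \<Rightarrow> (real^'p) \<times> real" where
  "sample i \<omega> = (X \<omega> $ i, Y \<omega> $ i)"

definition sample_noise :: "'n \<Rightarrow> 'w \<Rightarrow> real" where
  "sample_noise i \<omega> = noise (sample i \<omega>)"

definition others :: "'n \<Rightarrow> 'w \<Rightarrow> (real^'p^'n) \<times> (real^'n)" where
  "others i \<omega> = ((\<chi> j. if j = i then 0 else X \<omega> $ j), (\<chi> j. if j = i then 0 else Y \<omega> $ j))"

definition with_row :: "'n \<Rightarrow> real^'p \<Rightarrow> (real^'p^'n) \<times> (real^'n) \<Rightarrow> real^'p^'n" where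
  "with_row i u b = (\<chi> j. if j = i then u else fst b $ j)"

definition noise_at :: "'n \<Rightarrow> (real^'p^'n) \<times> (real^'n) \<Rightarrow> real" where
  "noise_at j b = noise (fst b $ j, snd b $ j)"

lemma measurable_sample [measurable]: "sample i \<in> measurable M pair_borel"
  unfolding sample_def by measurable

lemma borel_measurable_sample_noise [measurable]: "sample_noise i \<in> borel_measurable M"
  unfolding sample_noise_def by measurable

lemma measurable_others [measurable]: "others i \<in> measurable M pair_borel"
  unfolding others_def
  apply (intro measurable_Pair borel_measurable_vec_lambda)
  subgoal for j by (cases "j = i") auto
  subgoal for j by (cases "j = i") auto
  done

lemma borel_measurable_with_row [measurable (raw)]:
  assumes [measurable]: "u \<in> borel_measurable N" "b \<in> measurable N pair_borel"
  shows "(\<lambda>x. with_row i (u x) (b x)) \<in> borel_measurable N"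
  unfolding with_row_def
  apply (intro borel_measurable_vec_lambda)
  subgoal for j by (cases "j = i") auto
  done

lemma borel_measurable_with_row_const [measurable]: "(\<lambda>u. with_row i u b) \<in> borel_measurable borel"
  by (rule borel_measurable_with_row[where u="\<lambda>u. u" and b="\<lambda>_. b", simplified]) simp

lemma borel_measurable_noise_at [measurable]: "noise_at j \<in> borel_measurable pair_borel"
  unfolding noise_at_def by measurable

lemma X_eq_with_row: "X \<omega> = with_row i (fst (sample i \<omega>)) (others i \<omega>)"
  by (simp add: vec_eq_iff with_row_def sample_def others_def)

lemma noise_at_others: "j \<noteq> i \<Longrightarrow> noise_at j (others i \<omega>) = sample_noise j \<omega>"
  by (simp add: noise_at_def others_def sample_noise_def sample_def)

lemma distr_sample: "distr M pair_borel (sample i) = D"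
  using ident[of i] unfolding sample_def[abs_def] by (simp add: borel_prod)

text \<open>\<^const>\<open>prob_space.indep_var\<close> needs both variables in one space, so the \<open>i\<close>-th sample is
  placed into an otherwise zero data set.\<close>

definition embed_sample :: "'n \<Rightarrow> (real^'p) \<times> real \<Rightarrow> (real^'p^'n) \<times> (real^'n)" where
  "embed_sample i z = ((\<chi> j. if j = i then fst z else 0), (\<chi> j. if j = i then snd z else 0))"

lemma measurable_embed_sample [measurable]: "embed_sample i \<in> measurable pair_borel pair_borel"
  unfolding embed_sample_def
  apply (intro measurable_Pair borel_measurable_vec_lambda)
  subgoal for j by (cases "j = i") auto
  subgoal for j by (cases "j = i") auto
  done

lemma embed_sample_nth [simp]: "(fst (embed_sample i z) $ i, snd (embed_sample i z) $ i) = z"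
  by (simp add: embed_sample_def)

lemma indep_sample_others:
  "PM.indep_var pair_borel (\<lambda>\<omega>. embed_sample i (sample i \<omega>)) pair_borel (others i)"
proof -
  have "PM.indep_vars (\<lambda>_. pair_borel) sample UNIV"
    using iid unfolding sample_def[abs_def] by (simp add: borel_prod)
  then have restr: "PM.indep_var (Pi\<^sub>M {i} (\<lambda>_. pair_borel)) (\<lambda>\<omega>. restrict (\<lambda>j. sample j \<omega>) {i})
      (Pi\<^sub>M (-{i}) (\<lambda>_. pair_borel)) (\<lambda>\<omega>. restrict (\<lambda>j. sample j \<omega>) (-{i}))"
    by (rule PM.indep_var_restrict) auto
  define erase where "erase = (\<lambda>f::'n \<Rightarrow> (real^'p) \<times> real.
      ((\<chi> j. if j = i then 0 else fst (f j)) :: real^'p^'n, (\<chi> j. if j = i then 0 else snd (f j)) :: real^'n))"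
  have "(\<lambda>f. embed_sample i (f i)) \<in> measurable (Pi\<^sub>M {i} (\<lambda>_. pair_borel)) pair_borel"
    by measurable
  moreover have "erase \<in> measurable (Pi\<^sub>M (-{i}) (\<lambda>_. pair_borel)) pair_borel"
    unfolding erase_def
    apply (intro measurable_Pair borel_measurable_vec_lambda)
    subgoal for j by (cases "j = i") auto
    subgoal for j by (cases "j = i") auto
    done
  ultimately have "PM.indep_var pair_borel ((\<lambda>f. embed_sample i (f i)) \<circ> (\<lambda>\<omega>. restrict (\<lambda>j. sample j \<omega>) {i}))
      pair_borel (erase \<circ> (\<lambda>\<omega>. restrict (\<lambda>j. sample j \<omega>) (-{i})))"
    by (rule PM.indep_var_compose[OF restr])
  moreover have "erase \<circ> (\<lambda>\<omega>. restrict (\<lambda>j. sample j \<omega>) (-{i})) = others i"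
    by (simp add: erase_def fun_eq_iff others_def sample_def vec_eq_iff)
  ultimately show ?thesis by (simp add: comp_def)
qed

definition others_distr :: "'n \<Rightarrow> ((real^'p^'n) \<times> (real^'n)) measure" where
  "others_distr i = distr M pair_borel (others i)"

lemma distr_embed_sample_others:
  "distr M (pair_borel \<Otimes>\<^sub>M pair_borel) (\<lambda>\<omega>. (embed_sample i (sample i \<omega>), others i \<omega>))
    = distr D pair_borel (embed_sample i) \<Otimes>\<^sub>M others_distr i"
proof -
  have "distr M pair_borel (\<lambda>\<omega>. embed_sample i (sample i \<omega>)) = distr D pair_borel (embed_sample i)"
    unfolding distr_sample[of i, symmetric] by (subst distr_distr) (auto simp: comp_def)
  then show ?thesis
    using indep_sample_others[of i] unfolding PM.indep_var_distribution_eq others_distr_def by simp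
qed

text \<open>Fubini over the \<open>i\<close>-th sample, which by independence has law \<open>D\<close> given the others.\<close>

lemma integral_sample_others:
  fixes f :: "(real^'p) \<times> real \<Rightarrow> (real^'p^'n) \<times> (real^'n) \<Rightarrow> real"
  assumes f [measurable]: "(\<lambda>p. f (fst p) (snd p)) \<in> borel_measurable (pair_borel \<Otimes>\<^sub>M pair_borel)"
    and int: "integrable M (\<lambda>\<omega>. f (sample i \<omega>) (others i \<omega>))"
  shows "(\<integral>\<omega>. f (sample i \<omega>) (others i \<omega>) \<partial>M) = (\<integral>b. (\<integral>z. f z b \<partial>D) \<partial>others_distr i)"
proof -
  define Di where "Di = distr D pair_borel (embed_sample i)"
  define F where "F = (\<lambda>p. f (fst (fst p) $ i, snd (fst p) $ i) (snd p))"
  interpret Q: prob_space "others_distr i"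
    unfolding others_distr_def by (rule PM.prob_space_distr) simp
  interpret Di: prob_space Di
    unfolding Di_def by (rule prob_space.prob_space_distr[OF prob_space_D]) simp
  interpret PQ: pair_sigma_finite Di "others_distr i" by unfold_locales
  have F [measurable]: "F \<in> borel_measurable (pair_borel \<Otimes>\<^sub>M pair_borel)"
  proof -
    have "(\<lambda>p :: ((real^'p^'n) \<times> (real^'n)) \<times> (real^'p^'n) \<times> (real^'n).
        ((fst (fst p) $ i, snd (fst p) $ i), snd p)) \<in> measurable (pair_borel \<Otimes>\<^sub>M pair_borel) (pair_borel \<Otimes>\<^sub>M pair_borel)"
      by measurable
    from measurable_compose[OF this f] show ?thesis unfolding F_def by simp
  qed
  have pair: "(\<lambda>\<omega>. (embed_sample i (sample i \<omega>), others i \<omega>)) \<in> measurable M (pair_borel \<Otimes>\<^sub>M pair_borel)"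
    by measurable
  note joint = distr_embed_sample_others[of i, folded Di_def]
  have F_pair: "F (embed_sample i (sample i \<omega>), others i \<omega>) = f (sample i \<omega>) (others i \<omega>)" for \<omega>
    by (simp add: F_def)
  have "integrable (Di \<Otimes>\<^sub>M others_distr i) F"
    using int unfolding joint[symmetric] by (subst integrable_distr_eq[OF pair F]) (simp add: F_pair)
  then have "integrable (Di \<Otimes>\<^sub>M others_distr i) (\<lambda>(w, b). F (w, b))" by simp
  then have "(\<integral>b. (\<integral>w. F (w, b) \<partial>Di) \<partial>others_distr i) = integral\<^sup>L (Di \<Otimes>\<^sub>M others_distr i) (\<lambda>(w, b). F (w, b))"
    by (rule PQ.integral_snd)
  also have "\<dots> = (\<integral>\<omega>. f (sample i \<omega>) (others i \<omega>) \<partial>M)"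
    unfolding joint[symmetric] by (simp add: integral_distr[OF pair F] F_pair)
  also have "(\<integral>b. (\<integral>w. F (w, b) \<partial>Di) \<partial>others_distr i) = (\<integral>b. (\<integral>z. f z b \<partial>D) \<partial>others_distr i)"
  proof (rule Bochner_Integration.integral_cong[OF refl])
    fix b assume b: "b \<in> space (others_distr i)"
    have "(\<lambda>w. F (w, b)) \<in> borel_measurable pair_borel"
      by (rule measurable_Pair1[OF F]) (use b in \<open>simp add: others_distr_def\<close>)
    then show "(\<integral>w. F (w, b) \<partial>Di) = (\<integral>z. f z b \<partial>D)"
      unfolding Di_def by (subst integral_distr) (auto simp: F_def)
  qed
  finally show ?thesis ..
qed

lemma integrable_sample_noise_sq: "integrable M (\<lambda>\<omega>. (sample_noise i \<omega>)\<^sup>2)"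
  using integrable_distr_eq[OF measurable_sample, of "\<lambda>z. (noise z)\<^sup>2" i]
  unfolding distr_sample sample_noise_def by (simp add: integrable_noise_sq)

lemma integrable_sample_noise: "integrable M (sample_noise i)"
  using integrable_distr_eq[OF measurable_sample, of noise i]
  unfolding distr_sample sample_noise_def[abs_def] by (simp add: integrable_noise)

lemma integrable_bounded_design:
  fixes h :: "real^'p^'n \<Rightarrow> real"
  assumes [measurable]: "h \<in> borel_measurable borel" and "\<And>x. \<bar>h x\<bar> \<le> K"
  shows "integrable M (\<lambda>\<omega>. h (X \<omega>))"
  by (rule PM.integrable_const_bound[where B=K]) (use assms in auto)

lemma integrable_sample_noise_mult:
  fixes h :: "real^'p^'n \<Rightarrow> real"
  assumes [measurable]: "h \<in> borel_measurable borel" and "\<And>x. \<bar>h x\<bar> \<le> K"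
  shows "integrable M (\<lambda>\<omega>. sample_noise i \<omega> * h (X \<omega>))"
  by (rule integrable_mult_bounded[OF integrable_sample_noise, where K=K]) (use assms in auto)

lemma integrable_sample_noise_pair_mult:
  fixes h :: "real^'p^'n \<Rightarrow> real"
  assumes [measurable]: "h \<in> borel_measurable borel" and "\<And>x. \<bar>h x\<bar> \<le> K"
  shows "integrable M (\<lambda>\<omega>. sample_noise i \<omega> * sample_noise j \<omega> * h (X \<omega>))"
  by (rule integrable_mult_bounded[OF integrable_mult_of_squares, where K=K])
    (use assms in \<open>auto simp: integrable_sample_noise_sq\<close>)

text \<open>Conditionally on the other samples, the \<open>i\<close>-th noise is centred given its row of the
  design; the factor \<open>c\<close> may depend on the other samples' noise.\<close>

lemma integral_sample_noise_mult_eq_0: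
  fixes h :: "real^'p^'n \<Rightarrow> real" and c :: "(real^'p^'n) \<times> (real^'n) \<Rightarrow> real"
  assumes h [measurable]: "h \<in> borel_measurable borel" and h_bound: "\<And>x. \<bar>h x\<bar> \<le> K"
    and c [measurable]: "c \<in> borel_measurable pair_borel"
    and int: "integrable M (\<lambda>\<omega>. sample_noise i \<omega> * (c (others i \<omega>) * h (X \<omega>)))"
  shows "(\<integral>\<omega>. sample_noise i \<omega> * (c (others i \<omega>) * h (X \<omega>)) \<partial>M) = 0"
proof -
  define f where "f = (\<lambda>z b. noise z * (c b * h (with_row i (fst z) b)))"
  have f_eq: "sample_noise i \<omega> * (c (others i \<omega>) * h (X \<omega>)) = f (sample i \<omega>) (others i \<omega>)" for \<omega>
    unfolding f_def sample_noise_def by (subst X_eq_with_row[of _ i]) simp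
  have inner: "(\<integral>z. f z b \<partial>D) = 0" for b
  proof -
    have [measurable]: "(\<lambda>u. c b * h (with_row i u b)) \<in> borel_measurable borel" by measurable
    have "integrable D (\<lambda>z. noise z * (c b * h (with_row i (fst z) b)))"
      by (rule integrable_mult_bounded[OF integrable_noise, where K="\<bar>c b\<bar> * K"])
        (auto simp: abs_mult h_bound intro: mult_left_mono)
    then show ?thesis
      using integral_mult_noise_eq_0[of "\<lambda>u. c b * h (with_row i u b)"] unfolding f_def
      by (simp add: ac_simps)
  qed
  have "(\<integral>\<omega>. sample_noise i \<omega> * (c (others i \<omega>) * h (X \<omega>)) \<partial>M) = (\<integral>b. (\<integral>z. f z b \<partial>D) \<partial>others_distr i)"
    unfolding f_eq
  proof (rule integral_sample_others)
    show "(\<lambda>p. f (fst p) (snd p)) \<in> borel_measurable (pair_borel \<Otimes>\<^sub>M pair_borel)"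
      unfolding f_def by measurable
    show "integrable M (\<lambda>\<omega>. f (sample i \<omega>) (others i \<omega>))" using int unfolding f_eq .
  qed
  then show ?thesis by (simp add: inner)
qed

lemma integral_sample_noise_sq_mult:
  fixes h :: "real^'p^'n \<Rightarrow> real"
  assumes h [measurable]: "h \<in> borel_measurable borel" and h_bound: "\<And>x. \<bar>h x\<bar> \<le> K"
  shows "(\<integral>\<omega>. (sample_noise i \<omega>)\<^sup>2 * h (X \<omega>) \<partial>M) = \<sigma>\<^sup>2 * (\<integral>\<omega>. h (X \<omega>) \<partial>M)"
proof -
  define f where "f = (\<lambda>z b. (noise z)\<^sup>2 * h (with_row i (fst z) b))"
  define g where "g = (\<lambda>(z::(real^'p) \<times> real) b. h (with_row i (fst z) b))"
  have f_eq: "(sample_noise i \<omega>)\<^sup>2 * h (X \<omega>) = f (sample i \<omega>) (others i \<omega>)" for \<omega>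
    unfolding f_def sample_noise_def by (subst X_eq_with_row[of _ i]) simp
  have g_eq: "h (X \<omega>) = g (sample i \<omega>) (others i \<omega>)" for \<omega>
    unfolding g_def by (subst X_eq_with_row[of _ i]) simp
  have inner: "(\<integral>z. f z b \<partial>D) = \<sigma>\<^sup>2 * (\<integral>z. g z b \<partial>D)" for b
  proof -
    have "integrable D (\<lambda>z. (noise z)\<^sup>2 * h (with_row i (fst z) b))"
      by (rule integrable_mult_bounded[OF integrable_noise_sq, where K=K]) (auto simp: h_bound)
    then show ?thesis
      using integral_mult_noise_sq[of "\<lambda>u. h (with_row i u b)"] unfolding f_def g_def
      by (simp add: mult.commute)
  qed
  have int: "integrable M (\<lambda>\<omega>. (sample_noise i \<omega>)\<^sup>2 * h (X \<omega>))"
    by (rule integrable_mult_bounded[OF integrable_sample_noise_sq, where K=K]) (auto simp: h_bound)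
  have "(\<integral>\<omega>. (sample_noise i \<omega>)\<^sup>2 * h (X \<omega>) \<partial>M) = (\<integral>b. (\<integral>z. f z b \<partial>D) \<partial>others_distr i)"
    unfolding f_eq
  proof (rule integral_sample_others)
    show "(\<lambda>p. f (fst p) (snd p)) \<in> borel_measurable (pair_borel \<Otimes>\<^sub>M pair_borel)"
      unfolding f_def by measurable
    show "integrable M (\<lambda>\<omega>. f (sample i \<omega>) (others i \<omega>))" using int unfolding f_eq .
  qed
  also have "\<dots> = \<sigma>\<^sup>2 * (\<integral>b. (\<integral>z. g z b \<partial>D) \<partial>others_distr i)"
    by (simp add: inner)
  also have "(\<integral>b. (\<integral>z. g z b \<partial>D) \<partial>others_distr i) = (\<integral>\<omega>. h (X \<omega>) \<partial>M)"
    unfolding g_eq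
  proof (rule integral_sample_others[symmetric])
    show "(\<lambda>p. g (fst p) (snd p)) \<in> borel_measurable (pair_borel \<Otimes>\<^sub>M pair_borel)"
      unfolding g_def by measurable
    show "integrable M (\<lambda>\<omega>. g (sample i \<omega>) (others i \<omega>))"
      using integrable_bounded_design[OF h h_bound] unfolding g_eq .
  qed
  finally show ?thesis .
qed

lemma integral_noise_linear_form_eq_0:
  fixes h :: "'n \<Rightarrow> real^'p^'n \<Rightarrow> real"
  assumes [measurable]: "\<And>i. h i \<in> borel_measurable borel" and bound: "\<And>i x. \<bar>h i x\<bar> \<le> K"
  shows "(\<integral>\<omega>. (\<Sum>i\<in>UNIV. sample_noise i \<omega> * h i (X \<omega>)) \<partial>M) = 0"
proof -
  have int: "integrable M (\<lambda>\<omega>. sample_noise i \<omega> * h i (X \<omega>))" for i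
    by (rule integrable_sample_noise_mult[OF _ bound]) simp
  have "(\<integral>\<omega>. sample_noise i \<omega> * h i (X \<omega>) \<partial>M) = 0" for i
    using integral_sample_noise_mult_eq_0[of "h i" K "\<lambda>_. 1" i] int[of i] by (simp add: bound)
  then show ?thesis
    by (simp add: Bochner_Integration.integral_sum int)
qed

lemma integral_noise_quadratic_form:
  fixes h :: "'n \<Rightarrow> 'n \<Rightarrow> real^'p^'n \<Rightarrow> real"
  assumes [measurable]: "\<And>i j. h i j \<in> borel_measurable borel" and bound: "\<And>i j x. \<bar>h i j x\<bar> \<le> K"
  shows "(\<integral>\<omega>. (\<Sum>i\<in>UNIV. \<Sum>j\<in>UNIV. sample_noise i \<omega> * sample_noise j \<omega> * h i j (X \<omega>)) \<partial>M)
    = \<sigma>\<^sup>2 * (\<integral>\<omega>. (\<Sum>i\<in>UNIV. h i i (X \<omega>)) \<partial>M)"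
proof -
  have entry: "(\<integral>\<omega>. sample_noise i \<omega> * sample_noise j \<omega> * h i j (X \<omega>) \<partial>M)
      = (if j = i then \<sigma>\<^sup>2 * (\<integral>\<omega>. h i i (X \<omega>) \<partial>M) else 0)" for i j
  proof (cases "j = i")
    case True
    then show ?thesis
      using integral_sample_noise_sq_mult[of "h i i" K i] bound by (simp add: power2_eq_square)
  next
    case False
    have eq: "(\<lambda>\<omega>. sample_noise i \<omega> * sample_noise j \<omega> * h i j (X \<omega>))
        = (\<lambda>\<omega>. sample_noise i \<omega> * (noise_at j (others i \<omega>) * h i j (X \<omega>)))"
      by (simp add: fun_eq_iff noise_at_others[OF False])
    have "integrable M (\<lambda>\<omega>. sample_noise i \<omega> * sample_noise j \<omega> * h i j (X \<omega>))"
      by (rule integrable_sample_noise_pair_mult[OF _ bound]) simp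
    then show ?thesis
      using integral_sample_noise_mult_eq_0[of "h i j" K "noise_at j" i] False bound
      unfolding eq by simp
  qed
  have int2: "integrable M (\<lambda>\<omega>. sample_noise i \<omega> * sample_noise j \<omega> * h i j (X \<omega>))" for i j
    by (rule integrable_sample_noise_pair_mult[OF _ bound]) simp
  have int0: "integrable M (\<lambda>\<omega>. h i i (X \<omega>))" for i
    by (rule integrable_bounded_design[OF _ bound]) simp
  show ?thesis
    by (simp add: Bochner_Integration.integral_sum int2 int0 entry sum_distrib_left)
qed

end

section \<open>Risk of the minimum-norm interpolator\<close>

context linear_model
begin

definition bias_term :: "real^'p^'n \<Rightarrow> real" where
  "bias_term x = Sigma_quad (kernel_proj x *v \<theta>s)"

definition cross_term :: "real^'p^'n \<Rightarrow> real^'n" where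
  "cross_term x = transpose (pseudo_inv x) *v (Sigma_mat D *v (kernel_proj x *v \<theta>s))"

definition noise_matrix :: "real^'p^'n \<Rightarrow> real^'n^'n" where
  "noise_matrix x = transpose (pseudo_inv x) ** Sigma_mat D ** pseudo_inv x"

definition mean_risk :: "real^'p^'n \<Rightarrow> real" where
  "mean_risk x = bias_term x + \<sigma>\<^sup>2 * trace (noise_matrix x)"

lemma borel_measurable_bias_term [measurable]: "bias_term \<in> borel_measurable borel"
  unfolding bias_term_def by measurable

lemma borel_measurable_cross_term [measurable]: "cross_term \<in> borel_measurable borel"
  unfolding cross_term_def by measurable

lemma borel_measurable_noise_matrix [measurable]: "noise_matrix \<in> borel_measurable borel"
  unfolding noise_matrix_def by measurable

lemma borel_measurable_mean_risk [measurable]: "mean_risk \<in> borel_measurable borel"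
  unfolding mean_risk_def by measurable

lemma trace_noise_matrix_nonneg: "trace (noise_matrix x) \<ge> 0"
  unfolding trace_def noise_matrix_def congruence_diag_eq
  by (intro sum_nonneg Sigma_quad_nonneg[unfolded Sigma_quad_def])

lemma bias_term_nonneg: "bias_term x \<ge> 0"
  unfolding bias_term_def by (rule Sigma_quad_nonneg)

lemma mean_risk_nonneg: "mean_risk x \<ge> 0"
  unfolding mean_risk_def
  by (intro add_nonneg_nonneg mult_nonneg_nonneg bias_term_nonneg trace_noise_matrix_nonneg zero_le_power2)

lemma ennreal_mean_risk:
  "ennreal (mean_risk x) = ennreal (bias_term x) + ennreal (\<sigma>\<^sup>2) * ennreal (trace (noise_matrix x))"
  unfolding mean_risk_def
  by (simp add: ennreal_plus ennreal_mult bias_term_nonneg trace_noise_matrix_nonneg)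

lemma Sigma_quad_interpolator_eq:
  fixes x :: "real^'p^'n" and y :: "real^'n"
  assumes "full_row_rank x"
  defines "\<epsilon> \<equiv> y - x *v \<theta>s"
  shows "Sigma_quad (pseudo_inv x *v y - \<theta>s)
    = bias_term x - 2 * (\<epsilon> \<bullet> cross_term x) + \<epsilon> \<bullet> (noise_matrix x *v \<epsilon>)"
  unfolding Sigma_quad_def bias_term_def cross_term_def noise_matrix_def \<epsilon>_def
  by (rule full_row_rank.interpolator_quadratic_decomp[OF assms(1) transpose_Sigma_mat])

text \<open>An integrable majorant of the design-dependent coefficients is not available, so they
  are cut off where their total size exceeds \<open>k\<close>.\<close>

definition coeff_size :: "real^'p^'n \<Rightarrow> real" where
  "coeff_size x = \<bar>bias_term x\<bar> + (\<Sum>i\<in>UNIV. \<bar>cross_term x $ i\<bar>)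
     + (\<Sum>i\<in>UNIV. \<Sum>j\<in>UNIV. \<bar>noise_matrix x $ i $ j\<bar>)"

definition coeff_cutoff :: "nat \<Rightarrow> real^'p^'n \<Rightarrow> real" where
  "coeff_cutoff k x = (if coeff_size x \<le> real k then 1 else 0)"

lemma borel_measurable_coeff_cutoff [measurable]: "coeff_cutoff k \<in> borel_measurable borel"
  unfolding coeff_cutoff_def coeff_size_def by measurable

lemma abs_bias_term_le: "\<bar>bias_term x\<bar> \<le> coeff_size x"
  unfolding coeff_size_def by (simp add: sum_nonneg)

lemma abs_cross_term_le: "\<bar>cross_term x $ i\<bar> \<le> coeff_size x"
proof -
  have "\<bar>cross_term x $ i\<bar> \<le> (\<Sum>i\<in>UNIV. \<bar>cross_term x $ i\<bar>)" by (rule member_le_sum) auto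
  moreover have "0 \<le> (\<Sum>i\<in>UNIV. \<Sum>j\<in>UNIV. \<bar>noise_matrix x $ i $ j\<bar>)" by (simp add: sum_nonneg)
  ultimately show ?thesis unfolding coeff_size_def using abs_ge_zero[of "bias_term x"] by linarith
qed

lemma abs_noise_matrix_le: "\<bar>noise_matrix x $ i $ j\<bar> \<le> coeff_size x"
proof -
  have "\<bar>noise_matrix x $ i $ j\<bar> \<le> (\<Sum>j\<in>UNIV. \<bar>noise_matrix x $ i $ j\<bar>)"
    by (rule member_le_sum) auto
  also have "\<dots> \<le> (\<Sum>i\<in>UNIV. \<Sum>j\<in>UNIV. \<bar>noise_matrix x $ i $ j\<bar>)"
    by (rule member_le_sum) (auto simp: sum_nonneg)
  moreover have "0 \<le> (\<Sum>i\<in>UNIV. \<bar>cross_term x $ i\<bar>)" by (simp add: sum_nonneg)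
  ultimately show ?thesis unfolding coeff_size_def using abs_ge_zero[of "bias_term x"] by linarith
qed

lemma abs_trace_noise_matrix_le: "\<bar>trace (noise_matrix x)\<bar> \<le> coeff_size x"
proof -
  have "\<bar>trace (noise_matrix x)\<bar> \<le> (\<Sum>i\<in>UNIV. \<bar>noise_matrix x $ i $ i\<bar>)"
    unfolding trace_def by (rule sum_abs)
  also have "\<dots> \<le> (\<Sum>i\<in>UNIV. \<Sum>j\<in>UNIV. \<bar>noise_matrix x $ i $ j\<bar>)"
    by (intro sum_mono member_le_sum) auto
  moreover have "0 \<le> (\<Sum>i\<in>UNIV. \<bar>cross_term x $ i\<bar>)" by (simp add: sum_nonneg)
  ultimately show ?thesis unfolding coeff_size_def using abs_ge_zero[of "bias_term x"] by linarith
qed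

lemma abs_mult_coeff_cutoff_le: "\<bar>f\<bar> \<le> coeff_size x \<Longrightarrow> \<bar>f * coeff_cutoff k x\<bar> \<le> real k"
  unfolding coeff_cutoff_def by auto

lemma abs_mean_risk_cutoff_le: "\<bar>mean_risk x * coeff_cutoff k x\<bar> \<le> real k + \<sigma>\<^sup>2 * real k"
proof (cases "coeff_size x \<le> real k")
  case True
  have "\<bar>mean_risk x\<bar> \<le> \<bar>bias_term x\<bar> + \<sigma>\<^sup>2 * \<bar>trace (noise_matrix x)\<bar>"
    unfolding mean_risk_def
    using abs_triangle_ineq[of "bias_term x" "\<sigma>\<^sup>2 * trace (noise_matrix x)"] by (simp add: abs_mult)
  also have "\<dots> \<le> real k + \<sigma>\<^sup>2 * real k"
    using abs_bias_term_le[of x] abs_trace_noise_matrix_le[of x] True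
    by (intro add_mono mult_left_mono) auto
  finally show ?thesis using True by (simp add: coeff_cutoff_def)
qed (simp add: coeff_cutoff_def)

end

context random_design
begin

definition interpolator_risk :: "'w \<Rightarrow> real" where
  "interpolator_risk \<omega> = Sigma_quad (pseudo_inv (X \<omega>) *v Y \<omega> - \<theta>s)"

lemma borel_measurable_interpolator_risk [measurable]: "interpolator_risk \<in> borel_measurable M"
  unfolding interpolator_risk_def by measurable

lemma interpolator_risk_eq:
  assumes "\<omega> \<in> space M"
  shows "interpolator_risk \<omega>
    = bias_term (X \<omega>) - 2 * (\<Sum>i\<in>UNIV. sample_noise i \<omega> * cross_term (X \<omega>) $ i)
     + (\<Sum>i\<in>UNIV. \<Sum>j\<in>UNIV. sample_noise i \<omega> * sample_noise j \<omega> * noise_matrix (X \<omega>) $ i $ j)"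
proof -
  define \<epsilon> where "\<epsilon> = Y \<omega> - X \<omega> *v \<theta>s"
  have \<epsilon>: "\<epsilon> $ i = sample_noise i \<omega>" for i
    unfolding \<epsilon>_def sample_noise_def noise_def sample_def
    by (simp add: matrix_vector_mult_def inner_vec_def mult.commute)
  have "full_row_rank (X \<omega>)" by unfold_locales (rule full_rank[OF assms])
  then have "interpolator_risk \<omega>
      = bias_term (X \<omega>) - 2 * (\<epsilon> \<bullet> cross_term (X \<omega>)) + \<epsilon> \<bullet> (noise_matrix (X \<omega>) *v \<epsilon>)"
    unfolding interpolator_risk_def \<epsilon>_def by (rule Sigma_quad_interpolator_eq)
  also have "\<epsilon> \<bullet> cross_term (X \<omega>) = (\<Sum>i\<in>UNIV. sample_noise i \<omega> * cross_term (X \<omega>) $ i)"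
    by (simp add: inner_vec_def \<epsilon>)
  also have "\<epsilon> \<bullet> (noise_matrix (X \<omega>) *v \<epsilon>)
      = (\<Sum>i\<in>UNIV. \<Sum>j\<in>UNIV. sample_noise i \<omega> * sample_noise j \<omega> * noise_matrix (X \<omega>) $ i $ j)"
    by (simp add: inner_vec_def matrix_vector_mult_def \<epsilon> sum_distrib_left algebra_simps)
  finally show ?thesis .
qed

lemma integral_interpolator_risk_cutoff:
  shows "integrable M (\<lambda>\<omega>. interpolator_risk \<omega> * coeff_cutoff k (X \<omega>))"
    and "(\<integral>\<omega>. interpolator_risk \<omega> * coeff_cutoff k (X \<omega>) \<partial>M) = (\<integral>\<omega>. mean_risk (X \<omega>) * coeff_cutoff k (X \<omega>) \<partial>M)"
proof -
  define h0 where "h0 = (\<lambda>x :: real^'p^'n. bias_term x * coeff_cutoff k x)"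
  define h1 where "h1 = (\<lambda>(i::'n) x. cross_term x $ i * coeff_cutoff k x)"
  define h2 where "h2 = (\<lambda>(i::'n) (j::'n) x. noise_matrix x $ i $ j * coeff_cutoff k x)"
  have [measurable]: "h0 \<in> borel_measurable borel" unfolding h0_def by measurable
  have [measurable]: "h1 i \<in> borel_measurable borel" for i unfolding h1_def by measurable
  have [measurable]: "h2 i j \<in> borel_measurable borel" for i j unfolding h2_def by measurable
  have b0: "\<bar>h0 x\<bar> \<le> real k" and b1: "\<bar>h1 i x\<bar> \<le> real k" and b2: "\<bar>h2 i j x\<bar> \<le> real k" for i j x
    unfolding h0_def h1_def h2_def
    by (simp_all add: abs_mult_coeff_cutoff_le abs_bias_term_le abs_cross_term_le abs_noise_matrix_le)
  have pointwise: "interpolator_risk \<omega> * coeff_cutoff k (X \<omega>) = h0 (X \<omega>)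
      - 2 * (\<Sum>i\<in>UNIV. sample_noise i \<omega> * h1 i (X \<omega>))
      + (\<Sum>i\<in>UNIV. \<Sum>j\<in>UNIV. sample_noise i \<omega> * sample_noise j \<omega> * h2 i j (X \<omega>))"
    if "\<omega> \<in> space M" for \<omega>
    unfolding h0_def h1_def h2_def interpolator_risk_eq[OF that]
    by (simp add: algebra_simps sum_distrib_left sum_distrib_right)
  have int0: "integrable M (\<lambda>\<omega>. h0 (X \<omega>))"
    by (rule integrable_bounded_design[OF _ b0]) simp
  have int1: "integrable M (\<lambda>\<omega>. (\<Sum>i\<in>UNIV. sample_noise i \<omega> * h1 i (X \<omega>)))"
    by (intro Bochner_Integration.integrable_sum integrable_sample_noise_mult[OF _ b1]) simp
  have int2: "integrable M (\<lambda>\<omega>. (\<Sum>i\<in>UNIV. \<Sum>j\<in>UNIV. sample_noise i \<omega> * sample_noise j \<omega> * h2 i j (X \<omega>)))"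
    by (intro Bochner_Integration.integrable_sum integrable_sample_noise_pair_mult[OF _ b2]) simp
  have int_diag: "integrable M (\<lambda>\<omega>. (\<Sum>i\<in>UNIV. h2 i i (X \<omega>)))"
    by (intro Bochner_Integration.integrable_sum integrable_bounded_design[OF _ b2]) simp
  show "integrable M (\<lambda>\<omega>. interpolator_risk \<omega> * coeff_cutoff k (X \<omega>))"
    using int0 int1 int2 by (subst Bochner_Integration.integrable_cong[OF refl pointwise]) auto
  have linear: "(\<integral>\<omega>. (\<Sum>i\<in>UNIV. sample_noise i \<omega> * h1 i (X \<omega>)) \<partial>M) = 0"
    by (rule integral_noise_linear_form_eq_0[OF _ b1]) simp
  have quadratic: "(\<integral>\<omega>. (\<Sum>i\<in>UNIV. \<Sum>j\<in>UNIV. sample_noise i \<omega> * sample_noise j \<omega> * h2 i j (X \<omega>)) \<partial>M)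
      = \<sigma>\<^sup>2 * (\<integral>\<omega>. (\<Sum>i\<in>UNIV. h2 i i (X \<omega>)) \<partial>M)"
    by (rule integral_noise_quadratic_form[OF _ b2]) simp
  have "(\<integral>\<omega>. interpolator_risk \<omega> * coeff_cutoff k (X \<omega>) \<partial>M)
      = (\<integral>\<omega>. h0 (X \<omega>) \<partial>M) + \<sigma>\<^sup>2 * (\<integral>\<omega>. (\<Sum>i\<in>UNIV. h2 i i (X \<omega>)) \<partial>M)"
    using int0 int1 int2
    by (simp add: Bochner_Integration.integral_cong[OF refl pointwise] linear quadratic)
  also have "\<dots> = (\<integral>\<omega>. h0 (X \<omega>) + \<sigma>\<^sup>2 * (\<Sum>i\<in>UNIV. h2 i i (X \<omega>)) \<partial>M)"
    using int0 int_diag by simp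
  also have "\<dots> = (\<integral>\<omega>. mean_risk (X \<omega>) * coeff_cutoff k (X \<omega>) \<partial>M)"
    unfolding h0_def h2_def mean_risk_def trace_def by (simp add: sum_distrib_left algebra_simps)
  finally show "(\<integral>\<omega>. interpolator_risk \<omega> * coeff_cutoff k (X \<omega>) \<partial>M)
      = (\<integral>\<omega>. mean_risk (X \<omega>) * coeff_cutoff k (X \<omega>) \<partial>M)" .
qed

lemma nn_integral_mean_risk_cutoff_le:
  "(\<integral>\<^sup>+\<omega>. ennreal (mean_risk (X \<omega>) * coeff_cutoff k (X \<omega>)) \<partial>M)
    \<le> (\<integral>\<^sup>+\<omega>. ennreal (interpolator_risk \<omega>) \<partial>M)"
proof -
  have int: "integrable M (\<lambda>\<omega>. mean_risk (X \<omega>) * coeff_cutoff k (X \<omega>))"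
    by (rule integrable_bounded_design[OF _ abs_mean_risk_cutoff_le]) simp
  have "(\<integral>\<^sup>+\<omega>. ennreal (mean_risk (X \<omega>) * coeff_cutoff k (X \<omega>)) \<partial>M)
      = ennreal (\<integral>\<omega>. mean_risk (X \<omega>) * coeff_cutoff k (X \<omega>) \<partial>M)"
    by (rule nn_integral_eq_integral[OF int]) (simp add: mean_risk_nonneg coeff_cutoff_def)
  also have "\<dots> = ennreal (\<integral>\<omega>. interpolator_risk \<omega> * coeff_cutoff k (X \<omega>) \<partial>M)"
    by (simp add: integral_interpolator_risk_cutoff(2))
  also have "\<dots> = (\<integral>\<^sup>+\<omega>. ennreal (interpolator_risk \<omega> * coeff_cutoff k (X \<omega>)) \<partial>M)"
    by (rule nn_integral_eq_integral[OF integral_interpolator_risk_cutoff(1), symmetric])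
      (simp add: interpolator_risk_def Sigma_quad_nonneg coeff_cutoff_def)
  also have "\<dots> \<le> (\<integral>\<^sup>+\<omega>. ennreal (interpolator_risk \<omega>) \<partial>M)"
    by (intro nn_integral_mono ennreal_leI)
      (simp add: coeff_cutoff_def interpolator_risk_def Sigma_quad_nonneg)
  finally show ?thesis .
qed

lemma nn_integral_mean_risk_le:
  "(\<integral>\<^sup>+\<omega>. ennreal (mean_risk (X \<omega>)) \<partial>M) \<le> (\<integral>\<^sup>+\<omega>. ennreal (interpolator_risk \<omega>) \<partial>M)"
proof -
  have sup: "(SUP k. ennreal (mean_risk x * coeff_cutoff k x)) = ennreal (mean_risk x)" for x
  proof (rule antisym)
    show "(SUP k. ennreal (mean_risk x * coeff_cutoff k x)) \<le> ennreal (mean_risk x)"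
      by (intro SUP_least ennreal_leI) (simp add: coeff_cutoff_def mean_risk_nonneg)
    have "coeff_cutoff (nat \<lceil>coeff_size x\<rceil>) x = 1"
      unfolding coeff_cutoff_def using real_nat_ceiling_ge by simp
    then show "ennreal (mean_risk x) \<le> (SUP k. ennreal (mean_risk x * coeff_cutoff k x))"
      by (intro SUP_upper2[of "nat \<lceil>coeff_size x\<rceil>"]) simp_all
  qed
  have mono: "incseq (\<lambda>k \<omega>. ennreal (mean_risk (X \<omega>) * coeff_cutoff k (X \<omega>)))"
    by (intro monoI le_funI ennreal_leI mult_left_mono mean_risk_nonneg)
      (simp add: coeff_cutoff_def)
  have "(\<integral>\<^sup>+\<omega>. ennreal (mean_risk (X \<omega>)) \<partial>M)
      = (\<integral>\<^sup>+\<omega>. (SUP k. ennreal (mean_risk (X \<omega>) * coeff_cutoff k (X \<omega>))) \<partial>M)"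
    by (simp add: sup)
  also have "\<dots> = (SUP k. (\<integral>\<^sup>+\<omega>. ennreal (mean_risk (X \<omega>) * coeff_cutoff k (X \<omega>)) \<partial>M))"
    by (rule nn_integral_monotone_convergence_SUP[OF mono]) measurable
  also have "\<dots> \<le> (\<integral>\<^sup>+\<omega>. ennreal (interpolator_risk \<omega>) \<partial>M)"
    by (rule SUP_least) (rule nn_integral_mean_risk_cutoff_le)
  finally show ?thesis .
qed

lemma nn_integral_mean_risk_eq:
  "(\<integral>\<^sup>+\<omega>. ennreal (mean_risk (X \<omega>)) \<partial>M) = (\<integral>\<^sup>+\<omega>. ennreal (\<theta>s \<bullet> (B_mat (Sigma_mat D) (X \<omega>) *v \<theta>s)) \<partial>M)
     + ennreal (\<sigma>\<^sup>2) * (\<integral>\<^sup>+\<omega>. ennreal (trace (C_mat (Sigma_mat D) (X \<omega>))) \<partial>M)"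
proof -
  have "(\<integral>\<^sup>+\<omega>. ennreal (mean_risk (X \<omega>)) \<partial>M)
      = (\<integral>\<^sup>+\<omega>. ennreal (bias_term (X \<omega>)) + ennreal (\<sigma>\<^sup>2) * ennreal (trace (noise_matrix (X \<omega>))) \<partial>M)"
    unfolding ennreal_mean_risk ..
  also have "\<dots> = (\<integral>\<^sup>+\<omega>. ennreal (bias_term (X \<omega>)) \<partial>M) + ennreal (\<sigma>\<^sup>2) * (\<integral>\<^sup>+\<omega>. ennreal (trace (noise_matrix (X \<omega>))) \<partial>M)"
    by (subst nn_integral_add) (simp_all add: nn_integral_cmult)
  also have "(\<integral>\<^sup>+\<omega>. ennreal (bias_term (X \<omega>)) \<partial>M) = (\<integral>\<^sup>+\<omega>. ennreal (\<theta>s \<bullet> (B_mat (Sigma_mat D) (X \<omega>) *v \<theta>s)) \<partial>M)"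
    using full_rank unfolding bias_term_def Sigma_quad_def
    by (intro nn_integral_cong) (simp add: full_row_rank.B_mat_quadratic full_row_rank_def)
  also have "(\<integral>\<^sup>+\<omega>. ennreal (trace (noise_matrix (X \<omega>))) \<partial>M) = (\<integral>\<^sup>+\<omega>. ennreal (trace (C_mat (Sigma_mat D) (X \<omega>))) \<partial>M)"
    using full_rank unfolding noise_matrix_def
    by (intro nn_integral_cong) (simp add: full_row_rank.C_mat_eq full_row_rank_def)
  finally show ?thesis .
qed

end

section \<open>Symmetrisation\<close>

lemma (in prob_space) distr_pair_eq_of_indep_set:
  assumes f [measurable]: "f \<in> measurable M S" and g [measurable]: "g \<in> measurable M T"
    and h [measurable]: "h \<in> measurable S S'"
    and indep: "indep_set {f -` A \<inter> space M | A. A \<in> sets S} {g -` B \<inter> space M | B. B \<in> sets T}"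
  shows "distr M (S' \<Otimes>\<^sub>M T) (\<lambda>x. (h (f x), g x)) = distr M S' (\<lambda>x. h (f x)) \<Otimes>\<^sub>M distr M T g"
proof -
  have hf [measurable]: "(\<lambda>x. h (f x)) \<in> measurable M S'" by measurable
  interpret X: prob_space "distr M S' (\<lambda>x. h (f x))" by (rule prob_space_distr) fact
  interpret Y: prob_space "distr M T g" by (rule prob_space_distr) fact
  interpret XY: pair_prob_space "distr M S' (\<lambda>x. h (f x))" "distr M T g" ..
  show ?thesis
  proof (rule pair_measure_eqI[symmetric])
    fix A B assume A: "A \<in> sets (distr M S' (\<lambda>x. h (f x)))" and B: "B \<in> sets (distr M T g)"
    have pair: "(\<lambda>x. (h (f x), g x)) -` (A \<times> B) \<inter> space M
        = (f -` (h -` A \<inter> space S) \<inter> space M) \<inter> (g -` B \<inter> space M)"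
      using measurable_space[OF f] by auto
    have first: "(\<lambda>x. h (f x)) -` A \<inter> space M = f -` (h -` A \<inter> space S) \<inter> space M"
      using measurable_space[OF f] by auto
    have "h -` A \<inter> space S \<in> sets S" using A by (simp add: measurable_sets[OF h])
    moreover have "B \<in> sets T" using B by simp
    ultimately have "prob ((\<lambda>x. (h (f x), g x)) -` (A \<times> B) \<inter> space M)
        = prob ((\<lambda>x. h (f x)) -` A \<inter> space M) * prob (g -` B \<inter> space M)"
      unfolding pair first by (intro indep_setD[OF indep]) blast+
    then show "emeasure (distr M S' (\<lambda>x. h (f x))) A * emeasure (distr M T g) B
        = emeasure (distr M (S' \<Otimes>\<^sub>M T) (\<lambda>x. (h (f x), g x))) (A \<times> B)"
      using A B by (simp add: emeasure_distr emeasure_eq_measure measure_nonneg ennreal_mult)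
  qed (simp_all add: X.sigma_finite_measure_axioms Y.sigma_finite_measure_axioms)
qed

text \<open>If \<open>T\<close> is symmetric and independent of \<open>V\<close>, the pair \<open>(T, V)\<close> has the law of \<open>(-T, V)\<close>.\<close>

lemma (in prob_space) nn_integral_le_of_sign_flip:
  fixes T :: "'a \<Rightarrow> 'b::euclidean_space"
  assumes T [measurable]: "T \<in> borel_measurable M" and V [measurable]: "V \<in> measurable M N"
    and joint: "distr M (borel \<Otimes>\<^sub>M N) (\<lambda>\<omega>. (T \<omega>, V \<omega>)) = distr M borel T \<Otimes>\<^sub>M distr M N V"
    and joint_neg: "distr M (borel \<Otimes>\<^sub>M N) (\<lambda>\<omega>. (- T \<omega>, V \<omega>)) = distr M borel (\<lambda>\<omega>. - T \<omega>) \<Otimes>\<^sub>M distr M N V"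
    and symm: "distr M borel T = distr M borel (\<lambda>\<omega>. - T \<omega>)"
    and H [measurable]: "H \<in> borel_measurable (borel \<Otimes>\<^sub>M N)"
    and G [measurable]: "G \<in> borel_measurable N"
    and average: "\<And>t v. 2 * G v \<le> H (t, v) + H (- t, v)"
  shows "(\<integral>\<^sup>+\<omega>. G (V \<omega>) \<partial>M) \<le> (\<integral>\<^sup>+\<omega>. H (T \<omega>, V \<omega>) \<partial>M)"
proof -
  have "(\<integral>\<^sup>+\<omega>. H (- T \<omega>, V \<omega>) \<partial>M) = integral\<^sup>N (distr M (borel \<Otimes>\<^sub>M N) (\<lambda>\<omega>. (- T \<omega>, V \<omega>))) H"
    by (rule nn_integral_distr[symmetric]) simp_all
  also have "\<dots> = integral\<^sup>N (distr M (borel \<Otimes>\<^sub>M N) (\<lambda>\<omega>. (T \<omega>, V \<omega>))) H"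
    unfolding joint joint_neg symm ..
  also have "\<dots> = (\<integral>\<^sup>+\<omega>. H (T \<omega>, V \<omega>) \<partial>M)"
    by (rule nn_integral_distr) simp_all
  finally have flip: "(\<integral>\<^sup>+\<omega>. H (- T \<omega>, V \<omega>) \<partial>M) = (\<integral>\<^sup>+\<omega>. H (T \<omega>, V \<omega>) \<partial>M)" .
  have "2 * (\<integral>\<^sup>+\<omega>. G (V \<omega>) \<partial>M) = (\<integral>\<^sup>+\<omega>. 2 * G (V \<omega>) \<partial>M)"
    by (rule nn_integral_cmult[symmetric]) measurable
  also have "\<dots> \<le> (\<integral>\<^sup>+\<omega>. H (T \<omega>, V \<omega>) + H (- T \<omega>, V \<omega>) \<partial>M)"
    by (intro nn_integral_mono average)
  also have "\<dots> = (\<integral>\<^sup>+\<omega>. H (T \<omega>, V \<omega>) \<partial>M) + (\<integral>\<^sup>+\<omega>. H (- T \<omega>, V \<omega>) \<partial>M)"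
    by (rule nn_integral_add) measurable
  also have "\<dots> = 2 * (\<integral>\<^sup>+\<omega>. H (T \<omega>, V \<omega>) \<partial>M)"
    unfolding flip by (simp add: mult_2)
  finally show ?thesis
    by (subst (asm) ennreal_mult_le_mult_iff) simp_all
qed

lemma init_dir_uminus: "init_dir (- t) = - init_dir t"
  unfolding init_dir_def by simp

lemma borel_measurable_init_dir [measurable]: "init_dir \<in> borel_measurable borel"
  unfolding init_dir_def by measurable

context random_design
begin

lemma nn_integral_Risk_eq:
  assumes "\<And>\<omega>. \<omega> \<in> space M \<Longrightarrow> is_bias_min (X \<omega>) (Y \<omega>) (w \<omega>) (\<theta>hat \<omega>)"
  shows "(\<integral>\<^sup>+\<omega>. ennreal (Risk D \<theta>s (\<theta>hat \<omega>)) \<partial>M)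
    = (\<integral>\<^sup>+\<omega>. ennreal (Sigma_quad (bias_min_sol (X \<omega>) (Y \<omega>) (w \<omega>) - \<theta>s)) \<partial>M)"
proof (rule nn_integral_cong)
  fix \<omega> assume \<omega>: "\<omega> \<in> space M"
  have "\<theta>hat \<omega> = bias_min_sol (X \<omega>) (Y \<omega>) (w \<omega>)"
    using full_rank[OF \<omega>] assms[OF \<omega>]
    by (intro full_row_rank.is_bias_min_eq) (simp_all add: full_row_rank_def)
  then show "ennreal (Risk D \<theta>s (\<theta>hat \<omega>)) = ennreal (Sigma_quad (bias_min_sol (X \<omega>) (Y \<omega>) (w \<omega>) - \<theta>s))"
    by (simp add: Risk_eq_Sigma_quad)
qed

lemma nn_integral_interpolator_risk_le:
  fixes A :: "'w \<Rightarrow> 'c::topological_space" and h :: "'c \<Rightarrow> real^'p"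
  assumes A [measurable]: "A \<in> borel_measurable M" and h [measurable]: "h \<in> borel_measurable borel"
    and indep: "PM.indep_set {A -` S \<inter> space M | S. S \<in> sets borel}
      {(\<lambda>\<omega>. (X \<omega>, Y \<omega>)) -` S \<inter> space M | S. S \<in> sets borel}"
    and symm: "distr M borel (\<lambda>\<omega>. h (A \<omega>)) = distr M borel (\<lambda>\<omega>. - h (A \<omega>))"
  shows "(\<integral>\<^sup>+\<omega>. ennreal (interpolator_risk \<omega>) \<partial>M)
    \<le> (\<integral>\<^sup>+\<omega>. ennreal (Sigma_quad (bias_min_sol (X \<omega>) (Y \<omega>) (init_dir (h (A \<omega>))) - \<theta>s)) \<partial>M)"
proof -
  define H where "H = (\<lambda>p :: (real^'p) \<times> (real^'p^'n) \<times> (real^'n).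
    ennreal (Sigma_quad (bias_min_sol (fst (snd p)) (snd (snd p)) (init_dir (fst p)) - \<theta>s)))"
  define G where "G = (\<lambda>v :: (real^'p^'n) \<times> (real^'n). ennreal (Sigma_quad (pseudo_inv (fst v) *v snd v - \<theta>s)))"
  have XY [measurable]: "(\<lambda>\<omega>. (X \<omega>, Y \<omega>)) \<in> borel_measurable M"
    unfolding borel_prod[symmetric] by measurable
  have H [measurable]: "H \<in> borel_measurable (borel \<Otimes>\<^sub>M borel)"
    unfolding H_def borel_prod[symmetric] by measurable
  have G [measurable]: "G \<in> borel_measurable borel"
    unfolding G_def borel_prod[symmetric] by measurable
  have average: "2 * G v \<le> H (t, v) + H (- t, v)" for t v
  proof -
    have "ennreal (2 * Sigma_quad (pseudo_inv (fst v) *v snd v - \<theta>s))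
        \<le> ennreal (Sigma_quad (bias_min_sol (fst v) (snd v) (init_dir t) - \<theta>s)
          + Sigma_quad (bias_min_sol (fst v) (snd v) (- init_dir t) - \<theta>s))"
      by (rule ennreal_leI) (rule Sigma_quad_interpolator_le)
    then show ?thesis
      unfolding G_def H_def by (simp add: ennreal_mult' Sigma_quad_nonneg init_dir_uminus)
  qed
  have "(\<integral>\<^sup>+\<omega>. G (X \<omega>, Y \<omega>) \<partial>M) \<le> (\<integral>\<^sup>+\<omega>. H (h (A \<omega>), X \<omega>, Y \<omega>) \<partial>M)"
    by (rule PM.nn_integral_le_of_sign_flip[OF _ XY _ _ symm H G average])
      (simp_all add: PM.distr_pair_eq_of_indep_set[OF A XY h indep]
        PM.distr_pair_eq_of_indep_set[OF A XY borel_measurable_uminus[OF h] indep])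
  then show ?thesis
    unfolding G_def H_def interpolator_risk_def by simp
qed

end

theorem proposition1:
  fixes M :: "'w measure"
    and D :: "((real^'p) \<times> real) measure"
    and X :: "'w \<Rightarrow> real^'p^'n"
    and Y :: "'w \<Rightarrow> real^'n"
    and a0 :: "'w \<Rightarrow> real^'m"
    and W0 :: "'w \<Rightarrow> real^'p^'m"
    and \<theta>s :: "real^'p"
    and \<sigma> :: real
    and \<theta>hat :: "'w \<Rightarrow> real^'p"
  assumes pn: "CARD('p) > CARD('n)"
    and M: "prob_space M"
    and D: "prob_space D" "sets D = sets borel"
    and mom_x: "integrable D (\<lambda>z. (norm (fst z))\<^sup>2)"
    and mom_y: "integrable D (\<lambda>z. (snd z)\<^sup>2)"
    and theta_star: "\<And>\<theta>. (\<integral>z. (snd z - fst z \<bullet> \<theta>s)\<^sup>2 \<partial>D) \<le> (\<integral>z. (snd z - fst z \<bullet> \<theta>)\<^sup>2 \<partial>D)"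
    and noise_mean: "AE z in D. real_cond_exp D (vimage_algebra (space D) fst borel)
                        (\<lambda>z. snd z - fst z \<bullet> \<theta>s) z = 0"
    and noise_var: "AE z in D. real_cond_exp D (vimage_algebra (space D) fst borel)
                        (\<lambda>z. (snd z - fst z \<bullet> \<theta>s)\<^sup>2) z = \<sigma>\<^sup>2"
    and meas: "X \<in> borel_measurable M" "Y \<in> borel_measurable M"
              "a0 \<in> borel_measurable M" "W0 \<in> borel_measurable M"
    and iid: "prob_space.indep_vars M (\<lambda>_. borel) (\<lambda>i \<omega>. (X \<omega> $ i, Y \<omega> $ i)) UNIV"
    and ident: "\<And>i. distr M borel (\<lambda>\<omega>. (X \<omega> $ i, Y \<omega> $ i)) = D"
    and indep_init: "prob_space.indep_set M
        {(\<lambda>\<omega>. (a0 \<omega>, W0 \<omega>)) -` S \<inter> space M | S. S \<in> sets borel}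
        {(\<lambda>\<omega>. (X \<omega>, Y \<omega>)) -` S \<inter> space M | S. S \<in> sets borel}"
    and symm: "distr M borel (\<lambda>\<omega>. transpose (W0 \<omega>) *v a0 \<omega>)
             = distr M borel (\<lambda>\<omega>. - (transpose (W0 \<omega>) *v a0 \<omega>))"
    and full_rank: "\<And>\<omega>. \<omega> \<in> space M \<Longrightarrow> rank (X \<omega>) = CARD('n)"
    and est: "\<And>\<omega>. \<omega> \<in> space M \<Longrightarrow>
               is_bias_min (X \<omega>) (Y \<omega>) (init_dir (transpose (W0 \<omega>) *v a0 \<omega>)) (\<theta>hat \<omega>)"
  shows "(\<integral>\<^sup>+\<omega>. ennreal (Risk D \<theta>s (\<theta>hat \<omega>)) \<partial>M)
         \<ge> (\<integral>\<^sup>+\<omega>. ennreal (\<theta>s \<bullet> (B_mat (Sigma_mat D) (X \<omega>) *v \<theta>s)) \<partial>M)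
           + ennreal (\<sigma>\<^sup>2) * (\<integral>\<^sup>+\<omega>. ennreal (trace (C_mat (Sigma_mat D) (X \<omega>))) \<partial>M)"
proof -
  interpret R: random_design D \<theta>s \<sigma> M X Y
    using D mom_x mom_y noise_mean noise_var M meas(1,2) iid ident full_rank
    by (intro random_design.intro linear_model.intro random_design_axioms.intro) assumption+
  note [measurable] = meas
  have init: "(\<lambda>\<omega>. (a0 \<omega>, W0 \<omega>)) \<in> borel_measurable M"
    "(\<lambda>p. transpose (snd p) *v fst p) \<in> borel_measurable (borel :: ((real^'m) \<times> (real^'p^'m)) measure)"
    unfolding borel_prod[symmetric] by measurable
  have "(\<integral>\<^sup>+\<omega>. ennreal (R.interpolator_risk \<omega>) \<partial>M) \<le> (\<integral>\<^sup>+\<omega>. ennreal (Risk D \<theta>s (\<theta>hat \<omega>)) \<partial>M)"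
    using R.nn_integral_interpolator_risk_le[OF init indep_init] symm R.nn_integral_Risk_eq[OF est] by simp
  then show ?thesis
    using R.nn_integral_mean_risk_le unfolding R.nn_integral_mean_risk_eq by simp
qed

end
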